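(* Let $\varphi=\mathrm{vec}(A)$, $\varphi_0=\mathrm{vec}(A_0)$ with $A,A_0\in\mathbb{R}^{(p-r)\times r}$, $\|A\|_2<1$, $\|A_0\|_2<1$. If $$\|\sin\Theta\{U(\varphi),U(\varphi_0)\}\|_F\le\frac{(1-\|A_0\|_2^2)^2}{8(1+\|A_0\|_2^2)^2},$$ then $$\|\varphi-\varphi_0\|_2\le\sqrt2\Big\{1+\frac{32\sqrt2(1+\|A_0\|_2^2)^2}{(1-\|A_0\|_2^2)^2}\Big\}\|\sin\Theta\{U(\varphi),U(\varphi_0)\}\|_F .$$ Moreover, for all such $\varphi,\varphi_0$, $\|\sin\Theta\{U(\varphi),U(\varphi_0)\}\|_F\le4\|\varphi-\varphi_0\|_2$.
   Context: Fix $1\le r\le p$. For $A\in\mathbb{R}^{(p-r)\times r}$, $\varphi=\mathrm{vec}(A)$, $X_\varphi=\begin{bmatrix}0_{r\times r}&-A^{T}\\ A&0\end{bmatrix}$, $I_{p\times r}=\begin{bmatrix}I_r\\0\end{bmatrix}$, and $U(\varphi)=(I_p+X_\varphi)(I_p-X_\varphi)^{-1}I_{p\times r}\in\mathbb{O}(p,r)$ (Cayley parameterization; $\mathbb{O}(p,r)$ = $p\times r$ matrices with orthonormal columns). For $U,V\in\mathbb{O}(p,r)$ with singular values $\sigma_1\ge\dots\ge\sigma_r$ of $U^TV$, the canonical angles are $\theta_i=\arccos\sigma_i$ and $\|\sin\Theta(U,V)\|_F=(\sum_{i=1}^r\sin^2\theta_i)^{1/2}$. *)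

theory Defs
  imports "Jordan_Normal_Form.Char_Poly" "HOL-Computational_Algebra.Polynomial"
begin

definition vnorm2 :: "real vec \<Rightarrow> real" where
  "vnorm2 x = sqrt (\<Sum>i<dim_vec x. (x $ i)\<^sup>2)"

definition spec_norm :: "real mat \<Rightarrow> real" where
  "spec_norm A = Sup {vnorm2 (A *\<^sub>v x) | x. x \<in> carrier_vec (dim_col A) \<and> vnorm2 x = 1}"

definition vecm :: "real mat \<Rightarrow> real vec" where
  "vecm A = vec (dim_row A * dim_col A) (\<lambda>k. A $$ (k mod dim_row A, k div dim_row A))"

definition singular_values :: "real mat \<Rightarrow> real multiset" where
  "singular_values M = image_mset sqrt (proots (char_poly (transpose_mat M * M)))"

definition sinTheta_F :: "real mat \<Rightarrow> real mat \<Rightarrow> real" where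
  "sinTheta_F U V = sqrt (\<Sum>\<sigma>\<in>#singular_values (transpose_mat U * V). (sin (arccos \<sigma>))\<^sup>2)"

definition Xmat :: "real mat \<Rightarrow> real mat" where
  "Xmat A = four_block_mat (0\<^sub>m (dim_col A) (dim_col A)) (- transpose_mat A)
                           A (0\<^sub>m (dim_row A) (dim_row A))"

definition minv :: "real mat \<Rightarrow> real mat" where
  "minv M = (SOME B. B \<in> carrier_mat (dim_row M) (dim_row M) \<and>
                     B * M = 1\<^sub>m (dim_row M) \<and> M * B = 1\<^sub>m (dim_row M))"

definition Ipr :: "nat \<Rightarrow> nat \<Rightarrow> real mat" where
  "Ipr p r = mat p r (\<lambda>(i,j). if i = j then 1 else 0)"

(* Cayley parameterisation U(\<phi>), \<phi> = vec(A), A of size (p-r) x r, p = (p-r)+r *)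
definition cayleyU :: "real mat \<Rightarrow> real mat" where
  "cayleyU A = (let p = dim_row A + dim_col A; r = dim_col A; X = Xmat A in
      (1\<^sub>m p + X) * minv (1\<^sub>m p - X) * Ipr p r)"

end

theory Submission
  imports Defs "Jordan_Normal_Form.Schur_Decomposition"
begin

(* Write X = X_phi (skew) and R = (I - X)^-1, so that U(phi) = 2 R I_{p x r} - I_{p x r}.
   Eliminating the lower half of R, the two blocks of U are B = 2 (I + A^T A)^-1 - I and
   C = A (B + I).

   Upper bound: R is a contraction and R - R_0 = R (X - X_0) R_0, hence
   ||U - U_0||_F <= 2 ||X - X_0||_F = 2 sqrt 2 ||A - A_0||_F, while for orthonormal columns
   ||sin Theta||_F^2 = r - ||U^T U_0||_F^2 <= ||U - U_0||_F^2.

   Lower bound: ||U U^T - U_0 U_0^T||_F^2 = 2 ||sin Theta||_F^2 controls the blocks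
   B^2 - B_0^2 = B D + D B_0 and C B - C_0 B_0 = C D + (C - C_0) B_0, where D = B - B_0.
   Since B >= 0, B_0 >= b I with b = (1 - ||A_0||^2) / (1 + ||A_0||^2), and C is a
   contraction, this bounds D, then C - C_0, and finally A - A_0 through
   (A - A_0)(B_0 + I) = (C - C_0) - A D, giving
   ||A - A_0||_F <= (2 k + k^2) sqrt 2 ||sin Theta||_F with k = 1/b. *)

section \<open>Frobenius inner product\<close>

lemma cauchy_schwarz_sum:
  fixes f g :: "'a \<Rightarrow> real"
  shows "(\<Sum>i\<in>I. f i * g i)^2 \<le> (\<Sum>i\<in>I. (f i)^2) * (\<Sum>i\<in>I. (g i)^2)"
proof -
  have "0 \<le> (\<Sum>i\<in>I. \<Sum>j\<in>I. (f i * g j - f j * g i)^2)" by (simp add: sum_nonneg)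
  also have "\<dots> = (\<Sum>i\<in>I. \<Sum>j\<in>I. (f i)^2 * (g j)^2 + (f j)^2 * (g i)^2 - 2 * ((f i * g i) * (f j * g j)))"
    by (intro sum.cong refl) (simp add: power2_eq_square algebra_simps)
  also have "\<dots> = (\<Sum>i\<in>I. \<Sum>j\<in>I. (f i)^2 * (g j)^2) + (\<Sum>i\<in>I. \<Sum>j\<in>I. (f j)^2 * (g i)^2)
      - 2 * (\<Sum>i\<in>I. \<Sum>j\<in>I. (f i * g i) * (f j * g j))"
    by (simp only: sum.distrib sum_subtractf sum_distrib_left)
  also have "\<dots> = 2 * ((\<Sum>i\<in>I. (f i)^2) * (\<Sum>i\<in>I. (g i)^2) - (\<Sum>i\<in>I. f i * g i)^2)"
    unfolding sum_product[symmetric] power2_eq_square[of "sum _ _"]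
    by (subst sum.swap[of _ I I]) (simp add: sum_product[symmetric] algebra_simps)
  finally show ?thesis by simp
qed

lemma sum_lessThan_add_split:
  fixes f :: "nat \<Rightarrow> 'a::comm_monoid_add"
  shows "(\<Sum>k<r+m. f k) = (\<Sum>k<r. f k) + (\<Sum>l<m. f (r+l))"
  by (induct m) (auto simp: add.assoc)

lemma scalar_prod_self_nonneg: "0 \<le> (x::real vec) \<bullet> x"
  unfolding scalar_prod_def by (auto intro: sum_nonneg)

lemma scalar_prod_self_pos:
  assumes "v \<in> carrier_vec n" "v \<noteq> 0\<^sub>v n"
  shows "0 < (v::real vec) \<bullet> v"
proof -
  obtain i where i: "i < n" "v $ i \<noteq> 0" using assms by (metis vec_eq_iff carrier_vecD index_zero_vec)
  have "0 < (\<Sum>k\<in>{0..<n}. v $ k * v $ k)"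
    by (rule sum_pos2[of _ i]) (use i in \<open>auto simp: zero_less_mult_iff linorder_neq_iff\<close>)
  thus ?thesis using assms unfolding scalar_prod_def by simp
qed

lemma scalar_prod_le_norms:
  assumes "dim_vec y = dim_vec (x::real vec)"
  shows "x \<bullet> y \<le> sqrt (x \<bullet> x) * sqrt (y \<bullet> y)"
proof -
  have "(x \<bullet> y)^2 \<le> (x \<bullet> x) * (y \<bullet> y)"
    using cauchy_schwarz_sum[of "\<lambda>i. x $ i" "\<lambda>i. y $ i" "{0..<dim_vec x}"] assms
    unfolding scalar_prod_def by (simp add: power2_eq_square)
  hence "\<bar>x \<bullet> y\<bar> \<le> sqrt ((x \<bullet> x) * (y \<bullet> y))" by (metis real_sqrt_abs real_sqrt_le_mono)
  thus ?thesis by (simp add: real_sqrt_mult)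
qed

lemma vnorm2_eq_sqrt_scalar_prod: "vnorm2 x = sqrt (x \<bullet> x)"
  unfolding vnorm2_def scalar_prod_def by (simp add: power2_eq_square lessThan_atLeast0)

definition frob_inner :: "real mat \<Rightarrow> real mat \<Rightarrow> real" where
  "frob_inner X Y = (\<Sum>i<dim_row X. \<Sum>j<dim_col X. X $$ (i,j) * Y $$ (i,j))"

definition frob_sq :: "real mat \<Rightarrow> real" where
  "frob_sq X = frob_inner X X"

definition frob_norm :: "real mat \<Rightarrow> real" where
  "frob_norm X = sqrt (frob_sq X)"

lemma frob_sq_eq_sum: "frob_sq X = (\<Sum>i<dim_row X. \<Sum>j<dim_col X. (X $$ (i,j))^2)"
  unfolding frob_sq_def frob_inner_def by (simp add: power2_eq_square)

lemma frob_sq_nonneg: "0 \<le> frob_sq X"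
  unfolding frob_sq_eq_sum by (intro sum_nonneg) auto

lemma frob_norm_nonneg: "0 \<le> frob_norm X"
  unfolding frob_norm_def using frob_sq_nonneg by simp

lemma frob_norm_sq: "(frob_norm X)^2 = frob_sq X"
  unfolding frob_norm_def using frob_sq_nonneg by simp

lemma frob_inner_le_norms:
  assumes "dim_row Y = dim_row X" "dim_col Y = dim_col X"
  shows "frob_inner X Y \<le> frob_norm X * frob_norm Y"
proof -
  let ?I = "{..<dim_row X} \<times> {..<dim_col X}"
  have "frob_inner X Y = (\<Sum>(i,j)\<in>?I. X $$ (i,j) * Y $$ (i,j))"
    unfolding frob_inner_def by (simp add: sum.cartesian_product)
  moreover have "frob_sq Z = (\<Sum>(i,j)\<in>?I. Z $$ (i,j) * Z $$ (i,j))"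
    if "dim_row Z = dim_row X" "dim_col Z = dim_col X" for Z
    unfolding frob_sq_def frob_inner_def using that by (simp add: sum.cartesian_product)
  ultimately have "(frob_inner X Y)^2 \<le> frob_sq X * frob_sq Y"
    using cauchy_schwarz_sum[of "\<lambda>(i,j). X $$ (i,j)" "\<lambda>(i,j). Y $$ (i,j)" ?I] assms
    by (simp add: case_prod_beta power2_eq_square)
  hence "\<bar>frob_inner X Y\<bar> \<le> sqrt (frob_sq X * frob_sq Y)"
    by (metis real_sqrt_abs real_sqrt_le_mono)
  thus ?thesis unfolding frob_norm_def by (simp add: real_sqrt_mult)
qed

lemma frob_inner_eq_sum_cols:
  assumes "X \<in> carrier_mat nr nc" "Y \<in> carrier_mat nr nc"
  shows "frob_inner X Y = (\<Sum>j<nc. col X j \<bullet> col Y j)"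
  using assms unfolding frob_inner_def scalar_prod_def
  by (simp add: lessThan_atLeast0) (rule sum.swap)

lemma frob_inner_transpose:
  assumes "X \<in> carrier_mat nr nc" "Y \<in> carrier_mat nr nc"
  shows "frob_inner (X\<^sup>T) (Y\<^sup>T) = frob_inner X Y"
  using assms unfolding frob_inner_def by (simp add: sum.swap[of _ "{..<nc}"])

lemma frob_sq_transpose: "X \<in> carrier_mat nr nc \<Longrightarrow> frob_sq (X\<^sup>T) = frob_sq X"
  unfolding frob_sq_def using frob_inner_transpose by blast

lemma frob_inner_add_right:
  assumes "X \<in> carrier_mat nr nc" "Y \<in> carrier_mat nr nc" "Z \<in> carrier_mat nr nc"
  shows "frob_inner X (Y + Z) = frob_inner X Y + frob_inner X Z"
  using assms unfolding frob_inner_def by (simp add: algebra_simps sum.distrib)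

lemma frob_sq_diff:
  assumes "X \<in> carrier_mat nr nc" "Y \<in> carrier_mat nr nc"
  shows "frob_sq (X - Y) = frob_sq X - 2 * frob_inner X Y + frob_sq Y"
  using assms unfolding frob_sq_def frob_inner_def
  by (simp add: power2_eq_square algebra_simps sum_subtractf sum.distrib sum_distrib_left)

lemma frob_norm_triangle:
  assumes "X \<in> carrier_mat nr nc" "Y \<in> carrier_mat nr nc"
  shows "frob_norm (X + Y) \<le> frob_norm X + frob_norm Y"
proof -
  have "frob_sq (X + Y) = frob_sq X + 2 * frob_inner X Y + frob_sq Y"
    using assms unfolding frob_sq_def frob_inner_def
    by (simp add: power2_eq_square algebra_simps sum.distrib sum_distrib_left)
  also have "\<dots> \<le> (frob_norm X)^2 + 2 * (frob_norm X * frob_norm Y) + (frob_norm Y)^2"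
    using frob_inner_le_norms[of Y X] assms by (simp add: frob_norm_sq)
  also have "\<dots> = (frob_norm X + frob_norm Y)^2" by (simp add: power2_eq_square algebra_simps)
  finally show ?thesis
    by (metis frob_norm_def frob_norm_nonneg add_nonneg_nonneg real_le_lsqrt)
qed

lemma frob_norm_diff_le:
  assumes "X \<in> carrier_mat nr nc" "Y \<in> carrier_mat nr nc"
  shows "frob_norm (X - Y) \<le> frob_norm X + frob_norm Y"
proof -
  have "X - Y = X + (- Y)" using assms by auto
  moreover have "frob_norm (- Y) = frob_norm Y" unfolding frob_norm_def frob_sq_eq_sum by simp
  ultimately show ?thesis using frob_norm_triangle[of X nr nc "- Y"] assms by simp
qed

lemma frob_norm_le_of_inner:
  assumes "Y \<in> carrier_mat nr nc" "D \<in> carrier_mat nr nc" "b * frob_sq D \<le> frob_inner D Y"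
  shows "b * frob_norm D \<le> frob_norm Y"
proof (cases "frob_norm D = 0")
  case True thus ?thesis using frob_norm_nonneg[of Y] by simp
next
  case False
  hence pos: "frob_norm D > 0" using frob_norm_nonneg[of D] by simp
  have "frob_norm D * (b * frob_norm D) = b * frob_sq D"
    using frob_norm_sq[of D] by (simp add: power2_eq_square)
  moreover have "frob_inner D Y \<le> frob_norm D * frob_norm Y" using assms frob_inner_le_norms[of Y D] by simp
  ultimately have "frob_norm D * (b * frob_norm D) \<le> frob_norm D * frob_norm Y" using assms(3) by linarith
  thus ?thesis using pos by simp
qed

lemma frob_sq_submatrix_le:
  assumes Q: "Q \<in> carrier_mat nr nc" and E: "E \<in> carrier_mat k l"
    and dims: "d + k \<le> nr" "l \<le> nc"
    and entries: "\<And>i j. i < k \<Longrightarrow> j < l \<Longrightarrow> E $$ (i,j) = Q $$ (d + i, j)"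
  shows "frob_sq E \<le> frob_sq Q"
proof -
  let ?row = "\<lambda>i. \<Sum>j<nc. (Q $$ (i,j))^2"
  have "frob_sq E = (\<Sum>i<k. \<Sum>j<l. (Q $$ (d + i, j))^2)"
    unfolding frob_sq_eq_sum using E entries by simp
  also have "\<dots> \<le> (\<Sum>i<k. ?row (d + i))"
    using dims by (intro sum_mono sum_mono2) auto
  also have "\<dots> = (\<Sum>i\<in>(+) d ` {..<k}. ?row i)"
    by (simp add: sum.reindex)
  also have "\<dots> \<le> (\<Sum>i<nr. ?row i)"
    using dims by (intro sum_mono2) (auto intro: sum_nonneg)
  also have "\<dots> = frob_sq Q" unfolding frob_sq_eq_sum using Q by simp
  finally show ?thesis .
qed

lemma sum_lessThan_mult_mod_div:
  fixes g :: "nat \<Rightarrow> nat \<Rightarrow> real"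
  shows "(\<Sum>k<m*r. g (k mod m) (k div m)) = (\<Sum>j<r. \<Sum>i<m. g i j)"
proof (induct r)
  case (Suc r)
  have "(\<Sum>k<m * Suc r. g (k mod m) (k div m))
      = (\<Sum>k<m*r. g (k mod m) (k div m)) + (\<Sum>l<m. g ((m*r+l) mod m) ((m*r+l) div m))"
    using sum_lessThan_add_split[of "\<lambda>k. g (k mod m) (k div m)" "m*r" m] by (simp add: add.commute)
  also have "(\<Sum>l<m. g ((m*r+l) mod m) ((m*r+l) div m)) = (\<Sum>l<m. g l r)"
    by (intro sum.cong refl) auto
  finally show ?case using Suc by simp
qed simp

lemma vnorm2_vecm_diff:
  assumes A: "A \<in> carrier_mat m r" and A0: "A0 \<in> carrier_mat m r"
  shows "vnorm2 (vecm A - vecm A0) = frob_norm (A - A0)"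
proof -
  have "vnorm2 (vecm A - vecm A0) = sqrt (\<Sum>k<m*r. (A $$ (k mod m, k div m) - A0 $$ (k mod m, k div m))^2)"
    unfolding vnorm2_def vecm_def using A A0 by (intro arg_cong[where f=sqrt] sum.cong) auto
  also have "\<dots> = sqrt (\<Sum>j<r. \<Sum>i<m. (A $$ (i,j) - A0 $$ (i,j))^2)"
    by (subst sum_lessThan_mult_mod_div) rule
  also have "\<dots> = frob_norm (A - A0)" unfolding frob_norm_def frob_sq_eq_sum using A A0
    by simp (rule sum.swap)
  finally show ?thesis .
qed

section \<open>Contractions and positive definite factors\<close>

definition contraction :: "real mat \<Rightarrow> bool" where
  "contraction M \<longleftrightarrow> (\<forall>x \<in> carrier_vec (dim_col M). (M *\<^sub>v x) \<bullet> (M *\<^sub>v x) \<le> x \<bullet> x)"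

lemma contractionI:
  assumes "M \<in> carrier_mat k n" "\<And>x. x \<in> carrier_vec n \<Longrightarrow> (M *\<^sub>v x) \<bullet> (M *\<^sub>v x) \<le> x \<bullet> x"
  shows "contraction M"
  using assms unfolding contraction_def by auto

lemma contractionD:
  assumes "contraction M" "M \<in> carrier_mat k n" "x \<in> carrier_vec n"
  shows "(M *\<^sub>v x) \<bullet> (M *\<^sub>v x) \<le> x \<bullet> x"
  using assms unfolding contraction_def by auto

lemma transpose_mat_vec_bound:
  fixes A :: "real mat"
  assumes A: "A \<in> carrier_mat k n" and c: "0 \<le> c"
    and bound: "\<And>x. x \<in> carrier_vec n \<Longrightarrow> (A *\<^sub>v x) \<bullet> (A *\<^sub>v x) \<le> c^2 * (x \<bullet> x)"
    and y: "y \<in> carrier_vec k"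
  shows "(A\<^sup>T *\<^sub>v y) \<bullet> (A\<^sup>T *\<^sub>v y) \<le> c^2 * (y \<bullet> y)"
proof -
  define z where "z = A\<^sup>T *\<^sub>v y"
  have z: "z \<in> carrier_vec n" unfolding z_def using A y by simp
  have "z \<bullet> z = y \<bullet> (A *\<^sub>v z)"
    using transpose_vec_mult_scalar[OF A z y] unfolding z_def by simp
  also have "\<dots> \<le> sqrt (y \<bullet> y) * sqrt ((A *\<^sub>v z) \<bullet> (A *\<^sub>v z))"
    by (rule scalar_prod_le_norms) (use y A in simp)
  also have "\<dots> \<le> sqrt (y \<bullet> y) * (c * sqrt (z \<bullet> z))"
  proof (rule mult_left_mono)
    have "sqrt ((A *\<^sub>v z) \<bullet> (A *\<^sub>v z)) \<le> sqrt (c^2 * (z \<bullet> z))" using bound[OF z] by simp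
    thus "sqrt ((A *\<^sub>v z) \<bullet> (A *\<^sub>v z)) \<le> c * sqrt (z \<bullet> z)" using c by (simp add: real_sqrt_mult)
  qed (simp add: scalar_prod_self_nonneg)
  finally have le: "sqrt (z \<bullet> z) * sqrt (z \<bullet> z) \<le> (c * sqrt (y \<bullet> y)) * sqrt (z \<bullet> z)"
    using scalar_prod_self_nonneg[of z] by (simp add: mult_ac)
  have "sqrt (z \<bullet> z) \<le> c * sqrt (y \<bullet> y)"
  proof (cases "sqrt (z \<bullet> z) = 0")
    case True thus ?thesis using c scalar_prod_self_nonneg[of y] by simp
  next
    case False
    hence "0 < sqrt (z \<bullet> z)" using scalar_prod_self_nonneg[of z] by simp
    with le show ?thesis by (metis mult_le_cancel_right_pos)
  qed
  hence "(sqrt (z \<bullet> z))^2 \<le> (c * sqrt (y \<bullet> y))^2" using scalar_prod_self_nonneg[of z] by (intro power_mono) auto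
  thus ?thesis unfolding z_def using scalar_prod_self_nonneg[of y] scalar_prod_self_nonneg[of "A\<^sup>T *\<^sub>v y"]
    by (simp add: power_mult_distrib)
qed

lemma contraction_transpose:
  assumes "A \<in> carrier_mat k n" "contraction A"
  shows "contraction (A\<^sup>T)"
  using assms transpose_mat_vec_bound[of A k n 1]
  by (intro contractionI[of _ n k]) (auto dest: contractionD)

lemma contraction_mult:
  assumes M: "M \<in> carrier_mat k n" and N: "N \<in> carrier_mat n l"
    and "contraction M" "contraction N"
  shows "contraction (M * N)"
proof (rule contractionI[of _ k l])
  fix x :: "real vec" assume x: "x \<in> carrier_vec l"
  have "(M * N) *\<^sub>v x = M *\<^sub>v (N *\<^sub>v x)" using M N x by (simp add: assoc_mult_mat_vec)
  moreover have "(M *\<^sub>v (N *\<^sub>v x)) \<bullet> (M *\<^sub>v (N *\<^sub>v x)) \<le> (N *\<^sub>v x) \<bullet> (N *\<^sub>v x)"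
    using assms N x by (intro contractionD[of _ k n]) auto
  moreover have "(N *\<^sub>v x) \<bullet> (N *\<^sub>v x) \<le> x \<bullet> x" using assms x by (intro contractionD[of _ n l]) auto
  ultimately show "((M * N) *\<^sub>v x) \<bullet> ((M * N) *\<^sub>v x) \<le> x \<bullet> x" by simp
qed (use M N in simp)

lemma orthonormal_cols_norm:
  fixes U :: "real mat"
  assumes U: "U \<in> carrier_mat n r" and UU: "U\<^sup>T * U = 1\<^sub>m r" and x: "x \<in> carrier_vec r"
  shows "(U *\<^sub>v x) \<bullet> (U *\<^sub>v x) = x \<bullet> x"
proof -
  have Ux: "U *\<^sub>v x \<in> carrier_vec n" using U x by simp
  have "(U\<^sup>T *\<^sub>v (U *\<^sub>v x)) \<bullet> x = (U *\<^sub>v x) \<bullet> (U *\<^sub>v x)" by (rule transpose_vec_mult_scalar[OF U x Ux])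
  moreover have "U\<^sup>T *\<^sub>v (U *\<^sub>v x) = x" using UU U x by (simp add: assoc_mult_mat_vec[symmetric, of _ r n])
  ultimately show ?thesis by simp
qed

lemma orthonormal_cols_contraction:
  assumes "U \<in> carrier_mat n r" "U\<^sup>T * U = 1\<^sub>m r"
  shows "contraction U"
  using assms orthonormal_cols_norm by (intro contractionI) auto

lemma frob_sq_mult_contraction_left:
  assumes A: "A \<in> carrier_mat k n" and D: "D \<in> carrier_mat n nc" and contr: "contraction A"
  shows "frob_sq (A * D) \<le> frob_sq D"
proof -
  have "frob_sq (A * D) = (\<Sum>j<nc. col (A*D) j \<bullet> col (A*D) j)"
    unfolding frob_sq_def using A D by (intro frob_inner_eq_sum_cols) auto
  also have "\<dots> = (\<Sum>j<nc. (A *\<^sub>v col D j) \<bullet> (A *\<^sub>v col D j))"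
  proof (intro sum.cong refl)
    fix j assume "j \<in> {..<nc}"
    hence "col (A * D) j = A *\<^sub>v col D j" using A D by (intro col_mult2) auto
    thus "col (A * D) j \<bullet> col (A * D) j = (A *\<^sub>v col D j) \<bullet> (A *\<^sub>v col D j)" by (simp only:)
  qed
  also have "\<dots> \<le> (\<Sum>j<nc. col D j \<bullet> col D j)"
    using A D contr by (intro sum_mono contractionD[of _ k n]) auto
  also have "\<dots> = frob_sq D" unfolding frob_sq_def using D by (simp add: frob_inner_eq_sum_cols)
  finally show ?thesis .
qed

lemma frob_norm_mult_contraction_left:
  assumes "A \<in> carrier_mat k n" "D \<in> carrier_mat n nc" "contraction A"
  shows "frob_norm (A * D) \<le> frob_norm D"
  unfolding frob_norm_def using frob_sq_mult_contraction_left[OF assms] by simp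

lemma frob_sq_mult_contraction_right:
  assumes W: "W \<in> carrier_mat n k" and Z: "Z \<in> carrier_mat nr n" and contr: "contraction (W\<^sup>T)"
  shows "frob_sq (Z * W) \<le> frob_sq Z"
proof -
  have "frob_sq (Z * W) = frob_sq (W\<^sup>T * Z\<^sup>T)"
    using W Z frob_sq_transpose[of "Z * W" nr k] by (simp add: transpose_mult)
  also have "\<dots> \<le> frob_sq (Z\<^sup>T)" using W Z contr by (intro frob_sq_mult_contraction_left[of _ k n]) auto
  also have "\<dots> = frob_sq Z" using Z frob_sq_transpose by blast
  finally show ?thesis .
qed

lemma frob_inner_mult_left_ge:
  assumes B: "B \<in> carrier_mat n n" and D: "D \<in> carrier_mat n nc"
    and pd: "\<And>x. x \<in> carrier_vec n \<Longrightarrow> b * (x \<bullet> x) \<le> x \<bullet> (B *\<^sub>v x)"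
  shows "b * frob_sq D \<le> frob_inner D (B * D)"
proof -
  have "b * frob_sq D = (\<Sum>j<nc. b * (col D j \<bullet> col D j))"
    unfolding frob_sq_def using D by (simp add: frob_inner_eq_sum_cols sum_distrib_left)
  also have "\<dots> \<le> (\<Sum>j<nc. col D j \<bullet> (B *\<^sub>v col D j))"
    using D by (intro sum_mono pd) auto
  also have "\<dots> = (\<Sum>j<nc. col D j \<bullet> col (B * D) j)"
  proof (intro sum.cong refl)
    fix j assume "j \<in> {..<nc}"
    hence "col (B * D) j = B *\<^sub>v col D j" using B D by (intro col_mult2) auto
    thus "col D j \<bullet> (B *\<^sub>v col D j) = col D j \<bullet> col (B * D) j" by (simp only:)
  qed
  also have "\<dots> = frob_inner D (B * D)" using B D by (simp add: frob_inner_eq_sum_cols[of _ n nc])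
  finally show ?thesis .
qed

lemma frob_inner_mult_right_ge:
  assumes B: "B \<in> carrier_mat n n" and D: "D \<in> carrier_mat nr n" and sym: "B\<^sup>T = B"
    and pd: "\<And>x. x \<in> carrier_vec n \<Longrightarrow> b * (x \<bullet> x) \<le> x \<bullet> (B *\<^sub>v x)"
  shows "b * frob_sq D \<le> frob_inner D (D * B)"
proof -
  have "frob_inner D (D * B) = frob_inner (D\<^sup>T) (B * D\<^sup>T)"
    using B D sym frob_inner_transpose[of D nr n "D * B"] by (simp add: transpose_mult)
  moreover have "b * frob_sq (D\<^sup>T) \<le> frob_inner (D\<^sup>T) (B * D\<^sup>T)"
    using B D pd by (intro frob_inner_mult_left_ge[of _ n _ nr]) auto
  ultimately show ?thesis using frob_sq_transpose[OF D] by simp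
qed

lemma frob_norm_sylvester_lower_bound:
  assumes B: "B \<in> carrier_mat nr nr" and B0: "B0 \<in> carrier_mat n n" and D: "D \<in> carrier_mat nr n"
    and sym: "B0\<^sup>T = B0"
    and psd: "\<And>x. x \<in> carrier_vec nr \<Longrightarrow> 0 \<le> x \<bullet> (B *\<^sub>v x)"
    and pd: "\<And>x. x \<in> carrier_vec n \<Longrightarrow> b * (x \<bullet> x) \<le> x \<bullet> (B0 *\<^sub>v x)"
  shows "b * frob_norm D \<le> frob_norm (B * D + D * B0)"
proof (rule frob_norm_le_of_inner)
  have "0 * frob_sq D \<le> frob_inner D (B * D)"
    using B D psd by (intro frob_inner_mult_left_ge) auto
  moreover have "b * frob_sq D \<le> frob_inner D (D * B0)"
    using B0 D sym pd by (rule frob_inner_mult_right_ge)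
  moreover have "frob_inner D (B * D + D * B0) = frob_inner D (B * D) + frob_inner D (D * B0)"
    using B B0 D by (intro frob_inner_add_right) auto
  ultimately show "b * frob_sq D \<le> frob_inner D (B * D + D * B0)" by simp
qed (use B B0 D in auto)

lemma frob_norm_mult_right_lower_bound:
  assumes B0: "B0 \<in> carrier_mat n n" and D: "D \<in> carrier_mat nr n" and sym: "B0\<^sup>T = B0"
    and pd: "\<And>x. x \<in> carrier_vec n \<Longrightarrow> b * (x \<bullet> x) \<le> x \<bullet> (B0 *\<^sub>v x)"
  shows "b * frob_norm D \<le> frob_norm (D * B0)"
proof -
  have "0 \<le> x \<bullet> (0\<^sub>m nr nr *\<^sub>v x)" if "x \<in> carrier_vec nr" for x :: "real vec"
    using that by (simp add: scalar_prod_def)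
  thus ?thesis using frob_norm_sylvester_lower_bound[OF zero_carrier_mat[of nr nr] B0 D sym _ pd] B0 D
    by simp
qed

section \<open>The spectral norm\<close>

lemma spec_norm_upper:
  fixes A :: "real mat"
  assumes A: "A \<in> carrier_mat k n" and x: "x \<in> carrier_vec n" "vnorm2 x = 1"
  shows "vnorm2 (A *\<^sub>v x) \<le> spec_norm A"
proof -
  define S where "S = {vnorm2 (A *\<^sub>v x) | x. x \<in> carrier_vec n \<and> vnorm2 x = 1}"
  define K where "K = sqrt (\<Sum>i<k. (\<Sum>j<n. \<bar>A $$ (i,j)\<bar>)^2)"
  have "vnorm2 (A *\<^sub>v y) \<le> K" if y: "y \<in> carrier_vec n" "vnorm2 y = 1" for y
  proof -
    have yy: "(\<Sum>i\<in>{0..<n}. y $ i * y $ i) = 1"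
      using y unfolding vnorm2_eq_sqrt_scalar_prod scalar_prod_def by simp
    have yj: "\<bar>y $ j\<bar> \<le> 1" if j: "j < n" for j
    proof -
      have "(y $ j)^2 \<le> (\<Sum>i\<in>{0..<n}. y $ i * y $ i)"
        unfolding power2_eq_square by (rule member_le_sum) (use j in auto)
      thus ?thesis using yy by (simp add: abs_square_le_1)
    qed
    have "(A *\<^sub>v y) \<bullet> (A *\<^sub>v y) = (\<Sum>i<k. (\<Sum>j<n. A $$ (i,j) * y $ j)^2)"
      using A y(1) by (simp add: scalar_prod_def atLeast0LessThan power2_eq_square)
    also have "\<dots> \<le> (\<Sum>i<k. (\<Sum>j<n. \<bar>A $$ (i,j)\<bar>)^2)"
    proof (rule sum_mono)
      fix i assume "i \<in> {..<k}"
      have "\<bar>\<Sum>j<n. A $$ (i,j) * y $ j\<bar> \<le> (\<Sum>j<n. \<bar>A $$ (i,j) * y $ j\<bar>)" by (rule sum_abs)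
      also have "\<dots> \<le> (\<Sum>j<n. \<bar>A $$ (i,j)\<bar>)"
        by (rule sum_mono) (use yj in \<open>auto simp: abs_mult intro: mult_left_le\<close>)
      finally show "(\<Sum>j<n. A $$ (i,j) * y $ j)^2 \<le> (\<Sum>j<n. \<bar>A $$ (i,j)\<bar>)^2"
        by (metis abs_ge_zero abs_le_square_iff abs_of_nonneg order_trans sum_nonneg power2_abs)
    qed
    finally show ?thesis unfolding vnorm2_eq_sqrt_scalar_prod K_def by (rule real_sqrt_le_mono)
  qed
  hence "bdd_above S" unfolding S_def bdd_above_def by blast
  moreover have "vnorm2 (A *\<^sub>v x) \<in> S" unfolding S_def using x by blast
  ultimately have "vnorm2 (A *\<^sub>v x) \<le> Sup S" by (rule cSup_upper[rotated])
  thus ?thesis unfolding spec_norm_def S_def using A by simp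
qed

lemma spec_norm_nonneg:
  assumes A: "A \<in> carrier_mat k n" and n: "1 \<le> n"
  shows "0 \<le> spec_norm A"
proof -
  have e: "unit_vec n 0 \<in> carrier_vec n" "vnorm2 (unit_vec n 0 :: real vec) = 1"
    unfolding vnorm2_eq_sqrt_scalar_prod using n by (auto simp: scalar_prod_right_unit)
  show ?thesis
    using spec_norm_upper[OF A e] vnorm2_eq_sqrt_scalar_prod[of "A *\<^sub>v unit_vec n 0"]
      scalar_prod_self_nonneg[of "A *\<^sub>v unit_vec n 0"] by (metis order_trans real_sqrt_ge_zero)
qed

lemma spec_norm_bound:
  fixes A :: "real mat"
  assumes A: "A \<in> carrier_mat k n" and x: "x \<in> carrier_vec n"
  shows "(A *\<^sub>v x) \<bullet> (A *\<^sub>v x) \<le> (spec_norm A)^2 * (x \<bullet> x)"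
proof (cases "x = 0\<^sub>v n")
  case True
  hence "A *\<^sub>v x = 0\<^sub>v k" using A by (intro eq_vecI) (auto simp: scalar_prod_def)
  thus ?thesis using x scalar_prod_self_nonneg[of x] by simp
next
  case False
  define c where "c = vnorm2 x"
  have c: "0 < c" unfolding c_def vnorm2_eq_sqrt_scalar_prod using scalar_prod_self_pos[OF x False] by simp
  define y where "y = (1/c) \<cdot>\<^sub>v x"
  have y: "y \<in> carrier_vec n" unfolding y_def using x by simp
  have "y \<bullet> y = (1/c)^2 * (x \<bullet> x)" unfolding y_def using x by (simp add: power2_eq_square)
  also have "x \<bullet> x = c^2" unfolding c_def vnorm2_eq_sqrt_scalar_prod using scalar_prod_self_nonneg[of x] by simp
  finally have "vnorm2 y = 1" unfolding vnorm2_eq_sqrt_scalar_prod using c by (simp add: power2_eq_square)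
  hence "vnorm2 (A *\<^sub>v y) \<le> spec_norm A" by (rule spec_norm_upper[OF A y])
  moreover have "vnorm2 (A *\<^sub>v y) = vnorm2 (A *\<^sub>v x) / c"
    unfolding y_def vnorm2_eq_sqrt_scalar_prod using c A x by (simp add: mult_mat_vec real_sqrt_divide)
  ultimately have "vnorm2 (A *\<^sub>v x) \<le> spec_norm A * c" using c by (simp add: divide_le_eq)
  hence "(vnorm2 (A *\<^sub>v x))^2 \<le> (spec_norm A * c)^2"
    using scalar_prod_self_nonneg[of "A *\<^sub>v x"] by (intro power_mono) (auto simp: vnorm2_eq_sqrt_scalar_prod)
  thus ?thesis unfolding c_def vnorm2_eq_sqrt_scalar_prod
    using scalar_prod_self_nonneg[of x] scalar_prod_self_nonneg[of "A *\<^sub>v x"] by (simp add: power_mult_distrib)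
qed

section \<open>Trace, spectrum and canonical angles\<close>

definition mat_trace :: "'a :: comm_ring_1 mat \<Rightarrow> 'a" where
  "mat_trace A = (\<Sum>i<dim_row A. A $$ (i,i))"

lemma mat_trace_mult_comm:
  assumes "X \<in> carrier_mat n k" "Y \<in> carrier_mat k n"
  shows "mat_trace (X * Y) = mat_trace (Y * X)"
  using assms unfolding mat_trace_def
  by (simp add: scalar_prod_def sum.swap[of _ "{0..<n}"] lessThan_atLeast0 mult.commute)

lemma mat_trace_similar:
  assumes "similar_mat_wit A B P Q" "A \<in> carrier_mat n n"
  shows "mat_trace A = mat_trace B"
proof -
  from assms have c: "B \<in> carrier_mat n n" "P \<in> carrier_mat n n" "Q \<in> carrier_mat n n"
    and QP: "Q * P = 1\<^sub>m n" and A: "A = P * B * Q"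
    unfolding similar_mat_wit_def Let_def by auto
  have "mat_trace A = mat_trace (Q * (P * B))"
    unfolding A using c by (intro mat_trace_mult_comm[of _ n n]) auto
  also have "Q * (P * B) = B" using c QP by (simp add: assoc_mult_mat[symmetric, of Q n n])
  finally show ?thesis .
qed

lemma mat_trace_one: "mat_trace (1\<^sub>m r :: real mat) = real r"
  unfolding mat_trace_def by simp

lemma frob_inner_eq_mat_trace:
  assumes U: "U \<in> carrier_mat n r" and V: "V \<in> carrier_mat n r"
  shows "frob_inner U V = mat_trace (U\<^sup>T * V)"
  using U V unfolding frob_inner_def mat_trace_def
  by (simp add: scalar_prod_def atLeast0LessThan) (rule sum.swap)

lemma frob_inner_one_right:
  assumes M: "M \<in> carrier_mat r r"
  shows "frob_inner M (1\<^sub>m r) = mat_trace M"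
proof -
  have "(\<Sum>j<r. M $$ (i,j) * 1\<^sub>m r $$ (i,j)) = M $$ (i,i)" if i: "i < r" for i
    using i by (simp add: if_distrib[of "(*) _"] cong: if_cong)
  thus ?thesis unfolding frob_inner_def mat_trace_def using M by simp
qed

lemma frob_sq_orthonormal_cols:
  assumes U: "U \<in> carrier_mat n r" and UU: "U\<^sup>T * U = 1\<^sub>m r"
  shows "frob_sq U = real r"
  using frob_inner_eq_mat_trace[OF U U] UU mat_trace_one unfolding frob_sq_def by simp

interpretation of_real_poly_hom: map_poly_inj_idom_hom "of_real :: real \<Rightarrow> complex" ..

lemma proots_prod_linear_factors: "proots (\<Prod>l\<leftarrow>ls. [:-l, 1:]) = mset (ls :: real list)"
proof (induction ls)
  case (Cons a ls)
  have "(\<Prod>l\<leftarrow>ls. [:-l, 1:]) \<noteq> (0 :: real poly)" by (auto simp: prod_list_zero_iff)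
  hence "proots ([:-a, 1:] * (\<Prod>l\<leftarrow>ls. [:-l, 1:])) = proots [:-a, 1:] + proots (\<Prod>l\<leftarrow>ls. [:-l, 1:])"
    by (intro proots_mult) auto
  thus ?case using Cons by (simp add: proots_linear_factor)
qed simp

lemma eigenvalue_real_symmetric_real:
  fixes G :: "real mat"
  assumes G: "G \<in> carrier_mat n n" and sym: "G\<^sup>T = G"
    and ev: "eigenvalue (of_real_hom.mat_hom G) e"
  shows "Im e = 0"
proof -
  let ?Gc = "of_real_hom.mat_hom G"
  obtain v where v: "v \<in> carrier_vec n" "v \<noteq> 0\<^sub>v n" "?Gc *\<^sub>v v = e \<cdot>\<^sub>v v"
    using ev G unfolding eigenvalue_def eigenvector_def by auto
  have Gs: "\<And>i k. i < n \<Longrightarrow> k < n \<Longrightarrow> G $$ (k,i) = G $$ (i,k)"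
    using sym G by (metis carrier_matD index_transpose_mat(1))
  define q where "q = (\<Sum>i<n. \<Sum>k<n. cnj (v$i) * of_real (G $$ (i,k)) * v$k)"
  define N where "N = (\<Sum>i<n. cnj (v$i) * v$i)"
  have row: "\<And>i. i < n \<Longrightarrow> (?Gc *\<^sub>v v) $ i = (\<Sum>k<n. of_real (G $$ (i,k)) * v$k)"
    using G v(1) by (simp add: scalar_prod_def lessThan_atLeast0)
  have "q = (\<Sum>i<n. cnj (v$i) * (?Gc *\<^sub>v v) $ i)"
    unfolding q_def by (simp add: row sum_distrib_left mult.assoc)
  also have "\<dots> = e * N" unfolding N_def using v by (simp add: sum_distrib_left algebra_simps)
  finally have qe: "q = e * N" .
  have "cnj q = (\<Sum>k<n. \<Sum>i<n. v$i * of_real (G $$ (i,k)) * cnj (v$k))"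
    unfolding q_def by (simp add: cnj_sum) (rule sum.swap)
  also have "\<dots> = q" unfolding q_def
    by (intro sum.cong refl) (simp add: Gs mult.commute mult.left_commute)
  finally have cq: "cnj q = q" .
  have Nr: "N = of_real (\<Sum>i<n. (cmod (v$i))^2)"
    unfolding N_def of_real_sum complex_norm_square by (simp add: mult.commute)
  obtain i where i: "i < n" "v $ i \<noteq> 0" using v by (metis vec_eq_iff carrier_vecD index_zero_vec)
  have "0 < (\<Sum>i<n. (cmod (v$i))^2)" by (rule sum_pos2[of _ i]) (use i in auto)
  hence N0: "N \<noteq> 0" using Nr by (metis of_real_eq_0_iff less_irrefl)
  have "cnj e * cnj N = e * N" using qe cq by (metis complex_cnj_mult)
  moreover have "cnj N = N" using Nr by simp
  ultimately have "cnj e = e" using N0 by simp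
  thus ?thesis by (metis cnj.simps(2) neg_equal_zero)
qed

lemma char_poly_real_symmetric:
  fixes G :: "real mat"
  assumes G: "G \<in> carrier_mat n n" and sym: "G\<^sup>T = G"
  shows "\<exists>ls. char_poly G = (\<Prod>l\<leftarrow>ls. [:-l, 1:]) \<and> sum_list ls = mat_trace G"
proof -
  let ?Gc = "of_real_hom.mat_hom G :: complex mat"
  have Gc: "?Gc \<in> carrier_mat n n" using G by simp
  obtain es where es: "char_poly ?Gc = (\<Prod>a\<leftarrow>es. [:-a, 1:])" "length es = n"
    using char_poly_factorized[OF Gc] by auto
  obtain B P Q where sd: "schur_decomposition ?Gc es = (B,P,Q)"
    by (cases "schur_decomposition ?Gc es") auto
  note schur = schur_decomposition[OF Gc es(1) sd]
  have sim: "similar_mat_wit ?Gc B P Q" and diag: "diag_mat B = es" using schur by blast+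
  have Bc: "B \<in> carrier_mat n n" using similar_mat_witD2[OF Gc sim] by blast
  have tr: "mat_trace ?Gc = sum_list es"
    using mat_trace_similar[OF sim Gc] Bc unfolding diag[symmetric] mat_trace_def diag_mat_def
    by (simp add: sum_list_sum_nth lessThan_atLeast0)
  have real: "Im e = 0" if e: "e \<in> set es" for e
  proof -
    have "poly (char_poly ?Gc) e = 0" unfolding es(1) using e by (rule linear_poly_root)
    hence "eigenvalue ?Gc e" using eigenvalue_root_char_poly[OF Gc] by simp
    thus ?thesis by (rule eigenvalue_real_symmetric_real[OF G sym])
  qed
  define ls where "ls = map Re es"
  have es_eq: "es = map of_real ls"
    unfolding ls_def map_map o_def using real by (intro map_idI[symmetric]) (simp add: complex_eq_iff)
  have "map_poly of_real (char_poly G) = char_poly ?Gc" by (rule of_real_hom.char_poly_hom[OF G, symmetric])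
  also have "\<dots> = map_poly of_real (\<Prod>l\<leftarrow>ls. [:-l, 1:])"
    unfolding es(1) es_eq by (simp add: of_real_poly_hom.hom_prod_list o_def)
  finally have "char_poly G = (\<Prod>l\<leftarrow>ls. [:-l, 1:])" by (rule of_real_poly_hom.injectivity)
  moreover have "(of_real (sum_list ls) :: complex) = of_real (mat_trace G)"
    using tr G unfolding es_eq mat_trace_def by (simp add: of_real_sum sum_list_of_real)
  ultimately show ?thesis by auto
qed

text \<open>For a contraction \<open>M\<close> all eigenvalues of \<open>M\<^sup>T M\<close> lie in \<open>[0,1]\<close>, so each singular value
  \<open>\<sigma> = \<surd>\<lambda>\<close> contributes \<open>sin\<^sup>2 (arccos \<sigma>) = 1 - \<lambda>\<close>, and the eigenvalues sum to the trace.\<close>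

lemma sum_sin_arccos_singular_values:
  fixes M :: "real mat"
  assumes M: "M \<in> carrier_mat r r" and contr: "contraction M"
  shows "(\<Sum>\<sigma>\<in>#singular_values M. (sin (arccos \<sigma>))\<^sup>2) = real r - frob_sq M"
proof -
  define G where "G = M\<^sup>T * M"
  have G: "G \<in> carrier_mat r r" unfolding G_def using M by simp
  have sym: "G\<^sup>T = G" unfolding G_def using M by (simp add: transpose_mult)
  obtain ls where ls: "char_poly G = (\<Prod>l\<leftarrow>ls. [:-l, 1:])" "sum_list ls = mat_trace G"
    using char_poly_real_symmetric[OF G sym] by blast
  have len: "length ls = r"
    using degree_monic_char_poly[OF G] degree_linear_factors[of uminus ls] ls(1) by simp
  have bnd: "0 \<le> l \<and> l \<le> 1" if l: "l \<in> set ls" for l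
  proof -
    have "poly (char_poly G) l = 0" unfolding ls(1) using l by (rule linear_poly_root)
    hence "eigenvalue G l" using eigenvalue_root_char_poly[OF G] by simp
    then obtain v where v: "v \<in> carrier_vec r" "v \<noteq> 0\<^sub>v r" "G *\<^sub>v v = l \<cdot>\<^sub>v v"
      using G unfolding eigenvalue_def eigenvector_def by auto
    have "(G *\<^sub>v v) \<bullet> v = (M *\<^sub>v v) \<bullet> (M *\<^sub>v v)"
      unfolding G_def using M v transpose_vec_mult_scalar[OF M v(1), of "M *\<^sub>v v"]
      by (simp add: assoc_mult_mat_vec)
    hence e: "l * (v \<bullet> v) = (M *\<^sub>v v) \<bullet> (M *\<^sub>v v)" using v by simp
    have "0 \<le> l * (v \<bullet> v)" unfolding e by (rule scalar_prod_self_nonneg)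
    moreover have "l * (v \<bullet> v) \<le> 1 * (v \<bullet> v)" unfolding e using contractionD[OF contr M v(1)] by simp
    ultimately show ?thesis using scalar_prod_self_pos[OF v(1,2)]
      by (simp add: zero_le_mult_iff mult_le_cancel_right)
  qed
  have "(\<Sum>\<sigma>\<in>#singular_values M. (sin (arccos \<sigma>))\<^sup>2) = (\<Sum>l\<leftarrow>ls. (sin (arccos (sqrt l)))\<^sup>2)"
    unfolding singular_values_def G_def[symmetric] ls(1) proots_prod_linear_factors
    by (simp add: mset_map[symmetric] sum_mset_sum_list o_def del: mset_map)
  also have "\<dots> = (\<Sum>l\<leftarrow>ls. 1 - l)"
  proof (intro arg_cong[where f = sum_list] map_cong refl)
    fix l assume "l \<in> set ls"
    with bnd have "0 \<le> l" "l \<le> 1" by auto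
    moreover have "-1 \<le> sqrt l" using \<open>0 \<le> l\<close> by (meson le_minus_one_simps(1) order_trans real_sqrt_ge_zero)
    ultimately show "(sin (arccos (sqrt l)))\<^sup>2 = 1 - l" by (simp add: sin_arccos)
  qed
  also have "\<dots> = real r - mat_trace G" using len ls(2) by (simp add: sum_list_subtractf sum_list_triv)
  also have "mat_trace G = frob_sq M" unfolding G_def frob_sq_def using frob_inner_eq_mat_trace[OF M M] by simp
  finally show ?thesis .
qed

lemma sum_swap_gram_products:
  fixes a b :: "nat \<Rightarrow> nat \<Rightarrow> real"
  shows "(\<Sum>i<n. \<Sum>k<n. (\<Sum>j<r. a i j * a k j) * (\<Sum>l<r. b i l * b k l))
       = (\<Sum>j<r. \<Sum>l<r. (\<Sum>i<n. a i j * b i l)^2)"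
proof -
  define f where "f i k j l = a i j * a k j * (b i l * b k l)" for i k j l
  have "(\<Sum>j<r. \<Sum>l<r. (\<Sum>i<n. a i j * b i l)^2) = (\<Sum>j<r. \<Sum>l<r. \<Sum>i<n. \<Sum>k<n. f i k j l)"
    unfolding f_def power2_eq_square by (simp add: sum_product mult_ac)
  also have "\<dots> = (\<Sum>j<r. \<Sum>i<n. \<Sum>l<r. \<Sum>k<n. f i k j l)"
    by (rule sum.cong[OF refl], rule sum.swap)
  also have "\<dots> = (\<Sum>i<n. \<Sum>j<r. \<Sum>l<r. \<Sum>k<n. f i k j l)" by (rule sum.swap)
  also have "\<dots> = (\<Sum>i<n. \<Sum>j<r. \<Sum>k<n. \<Sum>l<r. f i k j l)"
    by (rule sum.cong[OF refl], rule sum.cong[OF refl], rule sum.swap)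
  also have "\<dots> = (\<Sum>i<n. \<Sum>k<n. \<Sum>j<r. \<Sum>l<r. f i k j l)"
    by (rule sum.cong[OF refl], rule sum.swap)
  finally show ?thesis unfolding f_def by (simp add: sum_product)
qed

lemma frob_inner_outer_products:
  fixes U V :: "real mat"
  assumes U: "U \<in> carrier_mat n r" and V: "V \<in> carrier_mat n r"
  shows "frob_inner (U * U\<^sup>T) (V * V\<^sup>T) = frob_sq (U\<^sup>T * V)"
proof -
  have "frob_inner (U * U\<^sup>T) (V * V\<^sup>T)
      = (\<Sum>i<n. \<Sum>k<n. (\<Sum>j<r. U $$ (i,j) * U $$ (k,j)) * (\<Sum>l<r. V $$ (i,l) * V $$ (k,l)))"
    unfolding frob_inner_def using U V by (simp add: scalar_prod_def atLeast0LessThan)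
  also have "\<dots> = (\<Sum>j<r. \<Sum>l<r. (\<Sum>i<n. U $$ (i,j) * V $$ (i,l))^2)" by (rule sum_swap_gram_products)
  also have "\<dots> = frob_sq (U\<^sup>T * V)" unfolding frob_sq_eq_sum using U V
    by (simp add: scalar_prod_def atLeast0LessThan)
  finally show ?thesis .
qed

context
  fixes U V :: "real mat" and n r :: nat
  assumes U: "U \<in> carrier_mat n r" and V: "V \<in> carrier_mat n r"
    and UU: "U\<^sup>T * U = 1\<^sub>m r" and VV: "V\<^sup>T * V = 1\<^sub>m r"
begin

lemma frob_sq_proj_diff: "frob_sq (U * U\<^sup>T - V * V\<^sup>T) = 2 * (real r - frob_sq (U\<^sup>T * V))"
proof -
  have "frob_sq (W * W\<^sup>T) = real r" if "W \<in> carrier_mat n r" "W\<^sup>T * W = 1\<^sub>m r" for W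
    using that frob_inner_outer_products[of W n r W] frob_sq_orthonormal_cols[of "1\<^sub>m r" r r]
    unfolding frob_sq_def by simp
  thus ?thesis using U V UU VV frob_inner_outer_products[OF U V]
    by (simp add: frob_sq_diff[of _ n n])
qed

lemma sinTheta_F_eq_sqrt: "sinTheta_F U V = sqrt (real r - frob_sq (U\<^sup>T * V))"
proof -
  have "contraction (U\<^sup>T * V)"
    using U V UU VV by (intro contraction_mult[of _ r n] contraction_transpose orthonormal_cols_contraction) auto
  thus ?thesis unfolding sinTheta_F_def using U V by (simp add: sum_sin_arccos_singular_values[of _ r])
qed

lemma sinTheta_F_sq: "(sinTheta_F U V)^2 = real r - frob_sq (U\<^sup>T * V)"
  and sinTheta_F_nonneg: "0 \<le> sinTheta_F U V"
proof -
  have "0 \<le> real r - frob_sq (U\<^sup>T * V)"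
    using frob_sq_proj_diff frob_sq_nonneg[of "U * U\<^sup>T - V * V\<^sup>T"] by simp
  thus "(sinTheta_F U V)^2 = real r - frob_sq (U\<^sup>T * V)" "0 \<le> sinTheta_F U V"
    unfolding sinTheta_F_eq_sqrt by simp_all
qed

lemma sinTheta_F_sq_le_frob_sq_diff: "(sinTheta_F U V)^2 \<le> frob_sq (U - V)"
proof -
  let ?M = "U\<^sup>T * V"
  have M: "?M \<in> carrier_mat r r" using U V by simp
  have "0 \<le> frob_sq (?M - 1\<^sub>m r)" by (rule frob_sq_nonneg)
  also have "\<dots> = frob_sq ?M - 2 * mat_trace ?M + real r"
    using M frob_sq_orthonormal_cols[of "1\<^sub>m r" r r]
    by (simp add: frob_sq_diff[OF M] frob_inner_one_right)
  finally have "real r - frob_sq ?M \<le> 2 * real r - 2 * mat_trace ?M" by simp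
  also have "\<dots> = frob_sq (U - V)"
    using frob_sq_diff[OF U V] frob_sq_orthonormal_cols[OF U UU] frob_sq_orthonormal_cols[OF V VV]
      frob_inner_eq_mat_trace[OF U V] by simp
  finally show ?thesis unfolding sinTheta_F_sq .
qed

end

section \<open>The Cayley transform of a skew-symmetric matrix\<close>

lemma skew_quadratic_form_zero:
  fixes K :: "real mat"
  assumes K: "K \<in> carrier_mat n n" and skew: "K\<^sup>T = - K" and w: "w \<in> carrier_vec n"
  shows "w \<bullet> (K *\<^sub>v w) = 0"
proof -
  have "w \<bullet> (K *\<^sub>v w) = (K\<^sup>T *\<^sub>v w) \<bullet> w" using transpose_vec_mult_scalar[OF K w w] by simp
  also have "\<dots> = - (w \<bullet> (K *\<^sub>v w))"
    using K w unfolding skew by (simp add: comm_scalar_prod[of _ n w])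
  finally show ?thesis by simp
qed

lemma one_minus_skew_invertible:
  fixes K :: "real mat"
  assumes K: "K \<in> carrier_mat n n" and skew: "K\<^sup>T = - K"
  shows "\<exists>W. W \<in> carrier_mat n n \<and> W * (1\<^sub>m n - K) = 1\<^sub>m n \<and> (1\<^sub>m n - K) * W = 1\<^sub>m n"
proof -
  have IK: "1\<^sub>m n - K \<in> carrier_mat n n" using K by (rule minus_carrier_mat)
  have "det (1\<^sub>m n - K) \<noteq> 0"
  proof
    assume "det (1\<^sub>m n - K) = 0"
    then obtain v where v: "v \<in> carrier_vec n" "v \<noteq> 0\<^sub>v n" "(1\<^sub>m n - K) *\<^sub>v v = 0\<^sub>v n"
      using det_0_iff_vec_prod_zero[OF IK] by blast
    have "(1\<^sub>m n - K) *\<^sub>v v = v - K *\<^sub>v v"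
      using minus_mult_distrib_mat_vec[of "1\<^sub>m n" n n K v] K v by simp
    hence "v - K *\<^sub>v v = 0\<^sub>v n" using v(3) by simp
    hence "v \<bullet> v - v \<bullet> (K *\<^sub>v v) = 0" using v K by (simp add: scalar_prod_minus_distrib[symmetric])
    hence "v \<bullet> v = 0" using skew_quadratic_form_zero[OF K skew v(1)] by simp
    thus False using scalar_prod_self_pos[OF v(1,2)] by simp
  qed
  from det_non_zero_imp_unit[OF IK this, of undefined]
  show ?thesis unfolding Units_def ring_mat_simps by auto
qed

lemma inverse_one_minus_skew_contraction:
  fixes K :: "real mat"
  assumes K: "K \<in> carrier_mat n n" and skew: "K\<^sup>T = - K"
    and W: "W \<in> carrier_mat n n" and inv: "(1\<^sub>m n - K) * W = 1\<^sub>m n"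
  shows "contraction W"
proof (rule contractionI[OF W])
  fix z :: "real vec" assume z: "z \<in> carrier_vec n"
  define w where "w = W *\<^sub>v z"
  have w: "w \<in> carrier_vec n" unfolding w_def using W z by simp
  have IK: "1\<^sub>m n - K \<in> carrier_mat n n" using K by (rule minus_carrier_mat)
  have "z = ((1\<^sub>m n - K) * W) *\<^sub>v z" using inv z by simp
  also have "\<dots> = (1\<^sub>m n - K) *\<^sub>v w" unfolding w_def using IK W z by (rule assoc_mult_mat_vec)
  also have "\<dots> = w - K *\<^sub>v w" using minus_mult_distrib_mat_vec[of "1\<^sub>m n" n n K w] K w by simp
  finally have zw: "z = w - K *\<^sub>v w" .
  have "z \<bullet> z = w \<bullet> w - 2 * (w \<bullet> (K *\<^sub>v w)) + (K *\<^sub>v w) \<bullet> (K *\<^sub>v w)"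
    unfolding zw using w mult_mat_vec_carrier[OF K w]
    by (simp add: minus_scalar_prod_distrib scalar_prod_minus_distrib comm_scalar_prod[of "K *\<^sub>v w" n w])
  thus "(W *\<^sub>v z) \<bullet> (W *\<^sub>v z) \<le> z \<bullet> z"
    using skew_quadratic_form_zero[OF K skew w] scalar_prod_self_nonneg[of "K *\<^sub>v w"]
    unfolding w_def by simp
qed

lemma Xmat_carrier: "A \<in> carrier_mat m r \<Longrightarrow> Xmat A \<in> carrier_mat (m + r) (m + r)"
  unfolding Xmat_def by auto

lemma Xmat_index:
  assumes "A \<in> carrier_mat m r" "i < m + r" "j < m + r"
  shows "Xmat A $$ (i,j) = (if i < r then (if j < r then 0 else - A $$ (j - r, i))
                            else (if j < r then A $$ (i - r, j) else 0))"
  using assms unfolding Xmat_def by auto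

lemma Xmat_transpose:
  assumes A: "A \<in> carrier_mat m r"
  shows "(Xmat A)\<^sup>T = - Xmat A"
  using Xmat_carrier[OF A] by (intro eq_matI) (auto simp: Xmat_index[OF A])

lemma frob_sq_Xmat_diff:
  assumes A: "A \<in> carrier_mat m r" and A0: "A0 \<in> carrier_mat m r"
  shows "frob_sq (Xmat A - Xmat A0) = 2 * frob_sq (A - A0)"
proof -
  let ?d = "\<lambda>i j. (A $$ (i,j) - A0 $$ (i,j))^2"
  have "frob_sq (Xmat A - Xmat A0) = (\<Sum>i<r+m. \<Sum>j<r+m. (Xmat A $$ (i,j) - Xmat A0 $$ (i,j))^2)"
    unfolding frob_sq_eq_sum using Xmat_carrier[OF A] Xmat_carrier[OF A0] by (simp add: add.commute)
  also have "\<dots> = (\<Sum>i<r. \<Sum>l<m. ?d l i) + (\<Sum>q<m. \<Sum>j<r. ?d q j)"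
    unfolding sum_lessThan_add_split
    by (simp add: Xmat_index[OF A] Xmat_index[OF A0] sum.distrib power2_eq_square algebra_simps)
  also have "(\<Sum>i<r. \<Sum>l<m. ?d l i) = (\<Sum>q<m. \<Sum>j<r. ?d q j)" by (rule sum.swap)
  also have "(\<Sum>q<m. \<Sum>j<r. ?d q j) = frob_sq (A - A0)"
    unfolding frob_sq_eq_sum using A A0 by simp
  finally show ?thesis by simp
qed

definition cayley_res :: "real mat \<Rightarrow> real mat" where
  "cayley_res A = minv (1\<^sub>m (dim_row A + dim_col A) - Xmat A)"

lemma cayley_res:
  assumes A: "A \<in> carrier_mat m r"
  shows "cayley_res A \<in> carrier_mat (m+r) (m+r)"
    and "cayley_res A * (1\<^sub>m (m+r) - Xmat A) = 1\<^sub>m (m+r)"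
    and "(1\<^sub>m (m+r) - Xmat A) * cayley_res A = 1\<^sub>m (m+r)"
proof -
  let ?M = "1\<^sub>m (m+r) - Xmat A"
  have "\<exists>W. W \<in> carrier_mat (m+r) (m+r) \<and> W * ?M = 1\<^sub>m (m+r) \<and> ?M * W = 1\<^sub>m (m+r)"
    by (rule one_minus_skew_invertible[OF Xmat_carrier[OF A] Xmat_transpose[OF A]])
  moreover have "cayley_res A = (SOME W. W \<in> carrier_mat (m+r) (m+r) \<and> W * ?M = 1\<^sub>m (m+r) \<and> ?M * W = 1\<^sub>m (m+r))"
    unfolding cayley_res_def minv_def using A Xmat_carrier[OF A] by simp
  ultimately show "cayley_res A \<in> carrier_mat (m+r) (m+r)" "cayley_res A * ?M = 1\<^sub>m (m+r)"
    "?M * cayley_res A = 1\<^sub>m (m+r)" using someI_ex[of "\<lambda>W. W \<in> carrier_mat (m+r) (m+r) \<and> W * ?M = 1\<^sub>m (m+r) \<and> ?M * W = 1\<^sub>m (m+r)"]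
    by auto
qed

lemma cayley_res_entry:
  assumes A: "A \<in> carrier_mat m r" and ij: "i < m + r" "j < m + r"
  shows "cayley_res A $$ (i,j) - (Xmat A * cayley_res A) $$ (i,j) = (if i = j then 1 else 0)"
proof -
  let ?X = "Xmat A" and ?R = "cayley_res A" and ?n = "m + r"
  have X: "?X \<in> carrier_mat ?n ?n" and R: "?R \<in> carrier_mat ?n ?n"
    using Xmat_carrier[OF A] cayley_res(1)[OF A] .
  have "?R - ?X * ?R = 1\<^sub>m ?n"
    using cayley_res(3)[OF A] X R by (simp add: minus_mult_distrib_mat[of _ ?n ?n])
  hence "(?R - ?X * ?R) $$ (i,j) = (if i = j then 1 else 0)" using ij by simp
  thus ?thesis using ij X R by simp
qed

lemma cayley_res_contraction: "A \<in> carrier_mat m r \<Longrightarrow> contraction (cayley_res A)"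
  using inverse_one_minus_skew_contraction[OF Xmat_carrier Xmat_transpose cayley_res(1,3)] .

lemma cayley_res_diff:
  assumes A: "A \<in> carrier_mat m r" and A0: "A0 \<in> carrier_mat m r"
  shows "cayley_res A - cayley_res A0 = cayley_res A * (Xmat A - Xmat A0) * cayley_res A0"
proof -
  let ?n = "m + r" and ?R = "cayley_res A" and ?Q = "cayley_res A0"
  let ?M = "1\<^sub>m ?n - Xmat A" and ?N = "1\<^sub>m ?n - Xmat A0"
  note R = cayley_res[OF A] and Q = cayley_res[OF A0]
  have M: "?M \<in> carrier_mat ?n ?n" and N: "?N \<in> carrier_mat ?n ?n"
    using Xmat_carrier[OF A] Xmat_carrier[OF A0] by auto
  have "Xmat A - Xmat A0 = ?N - ?M" using Xmat_carrier[OF A] Xmat_carrier[OF A0] by (intro eq_matI) auto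
  hence "?R * (Xmat A - Xmat A0) * ?Q = ?R * ?N * ?Q - ?R * ?M * ?Q"
    using R(1) Q(1) M N by (simp add: mult_minus_distrib_mat[of _ ?n ?n] minus_mult_distrib_mat[of _ ?n ?n])
  also have "?R * ?N * ?Q = ?R" using R(1) N Q by (simp add: assoc_mult_mat[of _ ?n ?n])
  also have "?R * ?M * ?Q = ?Q" using R(2) Q(1) by simp
  finally show ?thesis by simp
qed

lemma frob_sq_cayley_res_diff_le:
  assumes A: "A \<in> carrier_mat m r" and A0: "A0 \<in> carrier_mat m r"
  shows "frob_sq (cayley_res A - cayley_res A0) \<le> frob_sq (Xmat A - Xmat A0)"
proof -
  let ?n = "m + r"
  have R: "cayley_res A \<in> carrier_mat ?n ?n" and R0: "cayley_res A0 \<in> carrier_mat ?n ?n"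
    and dX: "Xmat A - Xmat A0 \<in> carrier_mat ?n ?n"
    using cayley_res(1)[OF A] cayley_res(1)[OF A0] Xmat_carrier[OF A0] by auto
  have "frob_sq (cayley_res A - cayley_res A0) = frob_sq (cayley_res A * ((Xmat A - Xmat A0) * cayley_res A0))"
    using cayley_res_diff[OF A A0] R R0 dX by (simp add: assoc_mult_mat[of _ ?n ?n])
  also have "\<dots> \<le> frob_sq ((Xmat A - Xmat A0) * cayley_res A0)"
    using R R0 dX cayley_res_contraction[OF A] by (intro frob_sq_mult_contraction_left[of _ ?n ?n _ ?n]) auto
  also have "\<dots> \<le> frob_sq (Xmat A - Xmat A0)"
    using R0 dX contraction_transpose[OF R0 cayley_res_contraction[OF A0]]
    by (rule frob_sq_mult_contraction_right)
  finally show ?thesis .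
qed

lemma cayleyU_index:
  assumes A: "A \<in> carrier_mat m r"
  shows "cayleyU A \<in> carrier_mat (m+r) r"
    and "\<And>i j. i < m + r \<Longrightarrow> j < r \<Longrightarrow>
      cayleyU A $$ (i,j) = 2 * cayley_res A $$ (i,j) - (if i = j then 1 else 0)"
proof -
  let ?X = "Xmat A" and ?R = "cayley_res A" and ?n = "m + r"
  have X: "?X \<in> carrier_mat ?n ?n" by (rule Xmat_carrier[OF A])
  have R: "?R \<in> carrier_mat ?n ?n" by (rule cayley_res(1)[OF A])
  have U: "cayleyU A = (1\<^sub>m ?n + ?X) * ?R * Ipr ?n r"
    unfolding cayleyU_def cayley_res_def Let_def using A by simp
  have P: "((1\<^sub>m ?n + ?X) * ?R) $$ (i,j) = 2 * ?R $$ (i,j) - (if i = j then 1 else 0)"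
    if "i < ?n" "j < ?n" for i j
    using cayley_res_entry[OF A that] that X R by (simp add: add_mult_distrib_mat[of _ ?n ?n])
  have Ipr: "(M * Ipr ?n r) $$ (i,j) = M $$ (i,j)"
    if "M \<in> carrier_mat ?n ?n" "i < ?n" "j < r" for M i j
    using that unfolding Ipr_def
    by (auto simp: scalar_prod_def if_distrib[of "(*) _"] sum.delta cong: if_cong)
  have PR: "(1\<^sub>m ?n + ?X) * ?R \<in> carrier_mat ?n ?n" using X R by (intro mult_carrier_mat add_carrier_mat) auto
  show "cayleyU A $$ (i,j) = 2 * ?R $$ (i,j) - (if i = j then 1 else 0)"
    if i: "i < ?n" and j: "j < r" for i j
  proof -
    have "cayleyU A $$ (i,j) = ((1\<^sub>m ?n + ?X) * ?R) $$ (i,j)" unfolding U by (rule Ipr[OF PR i j])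
    also have "\<dots> = 2 * ?R $$ (i,j) - (if i = j then 1 else 0)" by (rule P) (use i j in auto)
    finally show ?thesis .
  qed
  show "cayleyU A \<in> carrier_mat ?n r" unfolding U Ipr_def using X R by (intro mult_carrier_mat[of _ ?n ?n]) auto
qed

lemma frob_sq_cayleyU_diff_le:
  assumes A: "A \<in> carrier_mat m r" and A0: "A0 \<in> carrier_mat m r"
  shows "frob_sq (cayleyU A - cayleyU A0) \<le> 4 * frob_sq (cayley_res A - cayley_res A0)"
proof -
  let ?D = "cayley_res A - cayley_res A0"
  have U: "cayleyU A \<in> carrier_mat (m+r) r" and U0: "cayleyU A0 \<in> carrier_mat (m+r) r"
    using cayleyU_index(1) A A0 by blast+
  have R: "cayley_res A \<in> carrier_mat (m+r) (m+r)" and R0: "cayley_res A0 \<in> carrier_mat (m+r) (m+r)"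
    using cayley_res(1) A A0 by blast+
  have "frob_sq (cayleyU A - cayleyU A0) = (\<Sum>i<m+r. \<Sum>j<r. ((cayleyU A - cayleyU A0) $$ (i,j))^2)"
    unfolding frob_sq_eq_sum using U U0 by simp
  also have "\<dots> = (\<Sum>i<m+r. \<Sum>j<r. 4 * (?D $$ (i,j))^2)"
  proof (intro sum.cong refl)
    fix i j assume "i \<in> {..<m+r}" "j \<in> {..<r}"
    hence "(cayleyU A - cayleyU A0) $$ (i,j) = 2 * ?D $$ (i,j)"
      using U U0 R R0 cayleyU_index(2)[OF A, of i j] cayleyU_index(2)[OF A0, of i j] by simp
    thus "((cayleyU A - cayleyU A0) $$ (i,j))^2 = 4 * (?D $$ (i,j))^2" by (simp add: power2_eq_square)
  qed
  also have "\<dots> \<le> (\<Sum>i<m+r. \<Sum>j<m+r. 4 * (?D $$ (i,j))^2)"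
    by (intro sum_mono sum_mono2) auto
  also have "\<dots> = 4 * frob_sq ?D" unfolding frob_sq_eq_sum using R R0 by (simp add: sum_distrib_left)
  finally show ?thesis .
qed

text \<open>\<open>Y\<close> is the upper left block of \<open>R\<close>; both identities come from eliminating the lower
  block row of \<open>(I - X) R = I\<close>.\<close>

lemma cayley_res_blocks:
  assumes A: "A \<in> carrier_mat m r"
  defines "Y \<equiv> mat r r (\<lambda>(i,j). cayley_res A $$ (i,j))"
  shows "(1\<^sub>m r + A\<^sup>T * A) * Y = 1\<^sub>m r"
    and "\<And>q j. q < m \<Longrightarrow> j < r \<Longrightarrow> cayley_res A $$ (r+q,j) = (A * Y) $$ (q,j)"
proof -
  let ?X = "Xmat A" and ?R = "cayley_res A" and ?n = "m + r"
  have X: "?X \<in> carrier_mat ?n ?n" by (rule Xmat_carrier[OF A])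
  have R: "?R \<in> carrier_mat ?n ?n" by (rule cayley_res(1)[OF A])
  have Y: "Y \<in> carrier_mat r r" unfolding Y_def by simp
  have inv: "?R $$ (i,j) - (\<Sum>k<r+m. ?X $$ (i,k) * ?R $$ (k,j)) = (if i = j then 1 else 0)"
    if "i < ?n" "j < ?n" for i j
    using cayley_res_entry[OF A that] that X R by (simp add: scalar_prod_def atLeast0LessThan add.commute)
  define Y2 where "Y2 = mat m r (\<lambda>(i,j). ?R $$ (r+i,j))"
  have Y2: "Y2 \<in> carrier_mat m r" unfolding Y2_def by simp
  have bottom: "Y2 = A * Y"
  proof (rule eq_matI)
    fix q j assume "q < dim_row (A * Y)" "j < dim_col (A * Y)"
    hence q: "q < m" and j: "j < r" using A Y by auto
    have "(\<Sum>k<r+m. ?X $$ (r+q,k) * ?R $$ (k,j)) = (A * Y) $$ (q,j)"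
      unfolding sum_lessThan_add_split using A q j
      by (simp add: Xmat_index[OF A] Y_def scalar_prod_def atLeast0LessThan)
    thus "Y2 $$ (q,j) = (A * Y) $$ (q,j)" unfolding Y2_def using inv[of "r+q" j] q j by simp
  qed (use A Y Y2 in auto)
  show "(1\<^sub>m r + A\<^sup>T * A) * Y = 1\<^sub>m r"
  proof -
    have "(1\<^sub>m r + A\<^sup>T * A) * Y = Y + A\<^sup>T * Y2"
      unfolding bottom using A Y by (simp add: add_mult_distrib_mat[of _ r r] assoc_mult_mat[of _ r m _ r _ r])
    also have "\<dots> = 1\<^sub>m r"
    proof (rule eq_matI)
      fix i j assume "i < dim_row (1\<^sub>m r :: real mat)" "j < dim_col (1\<^sub>m r :: real mat)"
      hence i: "i < r" and j: "j < r" by auto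
      have "(\<Sum>k<r+m. ?X $$ (i,k) * ?R $$ (k,j)) = - (A\<^sup>T * Y2) $$ (i,j)"
        unfolding sum_lessThan_add_split using A i j
        by (simp add: Xmat_index[OF A] Y2_def sum_negf scalar_prod_def atLeast0LessThan)
      thus "(Y + A\<^sup>T * Y2) $$ (i,j) = 1\<^sub>m r $$ (i,j)"
        using inv[of i j] i j A Y2 unfolding Y_def by simp
    qed (use A Y Y2 in auto)
    finally show ?thesis .
  qed
  show "cayley_res A $$ (r+q,j) = (A * Y) $$ (q,j)" if "q < m" "j < r" for q j
    using that unfolding bottom[symmetric] Y2_def by simp
qed

lemma right_inverse_symmetric:
  fixes S Y :: "real mat"
  assumes S: "S \<in> carrier_mat n n" and Y: "Y \<in> carrier_mat n n" and SY: "S * Y = 1\<^sub>m n"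
    and sym: "S\<^sup>T = S"
  shows "Y\<^sup>T = Y" and "Y * S = 1\<^sub>m n"
proof -
  have YS: "Y\<^sup>T * S = 1\<^sub>m n" using SY S Y sym transpose_mult[OF S Y] by simp
  have "Y\<^sup>T = (Y\<^sup>T * S) * Y" using SY S Y by (simp add: assoc_mult_mat[of _ n n])
  thus "Y\<^sup>T = Y" using YS Y by simp
  with YS show "Y * S = 1\<^sub>m n" by simp
qed

lemma mat_eq_one_if_fixes_vectors:
  fixes M :: "real mat"
  assumes M: "M \<in> carrier_mat n n" and fix_vec: "\<And>x. x \<in> carrier_vec n \<Longrightarrow> M *\<^sub>v x = x"
  shows "M = 1\<^sub>m n"
proof (rule eq_matI)
  fix i j assume "i < dim_row (1\<^sub>m n :: real mat)" "j < dim_col (1\<^sub>m n :: real mat)"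
  hence i: "i < n" and j: "j < n" by auto
  have "M $$ (i,j) = (M *\<^sub>v unit_vec n j) $ i" using M i j by (simp add: scalar_prod_right_unit)
  thus "M $$ (i,j) = 1\<^sub>m n $$ (i,j)" using fix_vec[of "unit_vec n j"] i j by simp
qed (use M in auto)

lemma append_rows_index:
  assumes "B \<in> carrier_mat k n" "C \<in> carrier_mat l n" "i < k + l" "j < n"
  shows "(B @\<^sub>r C) $$ (i,j) = (if i < k then B $$ (i,j) else C $$ (i - k, j))"
  using assms unfolding append_rows_def by auto

lemma append_rows_transpose_mult_self:
  fixes B C :: "real mat"
  assumes B: "B \<in> carrier_mat k n" and C: "C \<in> carrier_mat l n"
  shows "(B @\<^sub>r C)\<^sup>T * (B @\<^sub>r C) = B\<^sup>T * B + C\<^sup>T * C"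
proof (rule eq_matI)
  fix i j assume "i < dim_row (B\<^sup>T * B + C\<^sup>T * C)" "j < dim_col (B\<^sup>T * B + C\<^sup>T * C)"
  hence i: "i < n" and j: "j < n" using B C by auto
  have BC: "B @\<^sub>r C \<in> carrier_mat (k + l) n" using B C by simp
  have "((B @\<^sub>r C)\<^sup>T * (B @\<^sub>r C)) $$ (i,j) = (\<Sum>q<k+l. (B @\<^sub>r C) $$ (q,i) * (B @\<^sub>r C) $$ (q,j))"
    using BC i j by (simp add: scalar_prod_def atLeast0LessThan)
  also have "\<dots> = (\<Sum>q<k. B $$ (q,i) * B $$ (q,j)) + (\<Sum>q<l. C $$ (q,i) * C $$ (q,j))"
    unfolding sum_lessThan_add_split using B C i j by (simp add: append_rows_index)
  also have "\<dots> = (B\<^sup>T * B + C\<^sup>T * C) $$ (i,j)"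
    using B C i j by (simp add: scalar_prod_def atLeast0LessThan)
  finally show "((B @\<^sub>r C)\<^sup>T * (B @\<^sub>r C)) $$ (i,j) = (B\<^sup>T * B + C\<^sup>T * C) $$ (i,j)" .
qed (use B C carrier_matD[OF carrier_append_rows[OF B C]] in auto)

lemma append_rows_mult_transpose_index:
  fixes B C :: "real mat"
  assumes B: "B \<in> carrier_mat k n" and C: "C \<in> carrier_mat l n"
  shows "\<And>i j. i < k \<Longrightarrow> j < k \<Longrightarrow> ((B @\<^sub>r C) * (B @\<^sub>r C)\<^sup>T) $$ (i,j) = (B * B\<^sup>T) $$ (i,j)"
    and "\<And>q j. q < l \<Longrightarrow> j < k \<Longrightarrow> ((B @\<^sub>r C) * (B @\<^sub>r C)\<^sup>T) $$ (k+q,j) = (C * B\<^sup>T) $$ (q,j)"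
  using B C carrier_matD[OF carrier_append_rows[OF B C]]
  by (auto simp: scalar_prod_def append_rows_index intro!: sum.cong)

locale cayley_blocks =
  fixes A Y :: "real mat" and m r :: nat
  assumes A: "A \<in> carrier_mat m r" and Y: "Y \<in> carrier_mat r r"
    and inverse: "(1\<^sub>m r + A\<^sup>T * A) * Y = 1\<^sub>m r"
begin

definition B :: "real mat" where "B = Y + Y - 1\<^sub>m r"
definition C :: "real mat" where "C = A * Y + A * Y"

lemma B_carrier: "B \<in> carrier_mat r r" unfolding B_def using Y by (intro minus_carrier_mat) auto
lemma C_carrier: "C \<in> carrier_mat m r" unfolding C_def using A Y by simp

lemma Y_sym: "Y\<^sup>T = Y" and inverse_left: "Y * (1\<^sub>m r + A\<^sup>T * A) = 1\<^sub>m r"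
proof -
  have "(1\<^sub>m r + A\<^sup>T * A)\<^sup>T = 1\<^sub>m r + A\<^sup>T * A"
    using A transpose_add[of "1\<^sub>m r" r r "A\<^sup>T * A"] transpose_mult[of "A\<^sup>T" r m A r] by simp
  from right_inverse_symmetric[OF _ Y inverse this] A
  show "Y\<^sup>T = Y" "Y * (1\<^sub>m r + A\<^sup>T * A) = 1\<^sub>m r" by auto
qed

lemma B_sym: "B\<^sup>T = B"
proof -
  have "B\<^sup>T = (Y + Y)\<^sup>T - (1\<^sub>m r)\<^sup>T" unfolding B_def using Y by (intro transpose_minus[of _ r r]) auto
  also have "(Y + Y)\<^sup>T = Y\<^sup>T + Y\<^sup>T" using Y by (intro transpose_add[of _ r r]) auto
  finally show ?thesis unfolding B_def using Y_sym by simp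
qed

lemma C_eq: "C = A * (B + 1\<^sub>m r)"
proof -
  have "B + 1\<^sub>m r = Y + Y" unfolding B_def using Y by (intro eq_matI) auto
  thus ?thesis unfolding C_def using A Y by (simp add: mult_add_distrib_mat)
qed

lemma cayleyU_eq: "cayleyU A = B @\<^sub>r C"
proof -
  define Y' where "Y' = mat r r (\<lambda>(i,j). cayley_res A $$ (i,j))"
  have Y': "Y' \<in> carrier_mat r r" unfolding Y'_def by simp
  note blocks = cayley_res_blocks[OF A, folded Y'_def]
  have "Y = Y * ((1\<^sub>m r + A\<^sup>T * A) * Y')" using blocks(1) Y by simp
  also have "\<dots> = (Y * (1\<^sub>m r + A\<^sup>T * A)) * Y'"
    using A by (intro assoc_mult_mat[symmetric, OF Y _ Y']) simp
  finally have YY': "Y' = Y" using inverse_left Y' by simp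
  show ?thesis
  proof (rule eq_matI)
    fix i j assume "i < dim_row (B @\<^sub>r C)" "j < dim_col (B @\<^sub>r C)"
    hence i: "i < m + r" and j: "j < r" using carrier_matD[OF carrier_append_rows[OF B_carrier C_carrier]] by auto
    show "cayleyU A $$ (i,j) = (B @\<^sub>r C) $$ (i,j)"
    proof (cases "i < r")
      case True
      have "Y $$ (i,j) = cayley_res A $$ (i,j)" using True j unfolding YY'[symmetric] Y'_def by simp
      thus ?thesis using True i j B_carrier C_carrier Y cayleyU_index(2)[OF A i j]
        by (simp add: append_rows_index B_def)
    next
      case False
      define q where "q = i - r"
      have q: "i = r + q" "q < m" using i False unfolding q_def by auto
      have "(B @\<^sub>r C) $$ (i,j) = C $$ (q,j)"
        using append_rows_index[OF B_carrier C_carrier, of i j] q i j False by simp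
      thus ?thesis using q j A Y cayleyU_index(2)[OF A i j] blocks(2)[of q j, unfolded YY']
        by (simp add: C_def)
    qed
  qed (use cayleyU_index(1)[OF A] carrier_matD[OF carrier_append_rows[OF B_carrier C_carrier]] in auto)
qed

text \<open>For \<open>x \<in> \<real>\<^sup>r\<close> write \<open>w = Y x\<close>, \<open>u = A w\<close> and \<open>t = A\<^sup>T u\<close>, so that \<open>x = w + t\<close> and
  \<open>t \<bullet> w = u \<bullet> u\<close>; the quadratic forms of \<open>B\<close> and \<open>C\<close> are computed in these terms.\<close>

definition w :: "real vec \<Rightarrow> real vec" where "w x = Y *\<^sub>v x"
definition u :: "real vec \<Rightarrow> real vec" where "u x = A *\<^sub>v w x"
definition t :: "real vec \<Rightarrow> real vec" where "t x = A\<^sup>T *\<^sub>v u x"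

context
  fixes x :: "real vec" assumes x: "x \<in> carrier_vec r"
begin

lemma w_carrier: "w x \<in> carrier_vec r" unfolding w_def using Y x by simp
lemma u_carrier: "u x \<in> carrier_vec m" unfolding u_def using A w_carrier by simp
lemma t_carrier: "t x \<in> carrier_vec r" unfolding t_def using A u_carrier by simp

lemma x_split: "x = w x + t x"
proof -
  have "x = ((1\<^sub>m r + A\<^sup>T * A) * Y) *\<^sub>v x" using inverse x by simp
  also have "\<dots> = (1\<^sub>m r + A\<^sup>T * A) *\<^sub>v w x" unfolding w_def using A Y x by (intro assoc_mult_mat_vec) auto
  also have "\<dots> = w x + (A\<^sup>T * A) *\<^sub>v w x"
    using A w_carrier by (simp add: add_mult_distrib_mat_vec[of "1\<^sub>m r" r r])
  also have "(A\<^sup>T * A) *\<^sub>v w x = t x" unfolding t_def u_def using A w_carrier by (simp add: assoc_mult_mat_vec)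
  finally show ?thesis .
qed

lemma t_scalar_prod_w: "t x \<bullet> w x = u x \<bullet> u x"
  unfolding t_def using transpose_vec_mult_scalar[OF A w_carrier u_carrier] unfolding u_def by simp

lemma x_norm_sq_split: "x \<bullet> x = w x \<bullet> w x + 2 * (u x \<bullet> u x) + t x \<bullet> t x"
proof -
  have "x \<bullet> x = (w x + t x) \<bullet> (w x + t x)" using x_split by simp
  also have "\<dots> = w x \<bullet> w x + 2 * (t x \<bullet> w x) + t x \<bullet> t x" using w_carrier t_carrier
    by (simp add: add_scalar_prod_distrib[of _ r] scalar_prod_add_distrib[of _ r] comm_scalar_prod[of "w x" r "t x"])
  finally show ?thesis using t_scalar_prod_w by simp
qed

lemma B_mult_vec: "B *\<^sub>v x = w x + w x - x"
  unfolding B_def w_def using Y x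
  by (simp add: minus_mult_distrib_mat_vec[of _ r r] add_mult_distrib_mat_vec[of _ r r])

lemma C_mult_vec: "C *\<^sub>v x = u x + u x"
  unfolding C_def u_def w_def using A Y x
  by (simp add: add_mult_distrib_mat_vec[of _ m r] assoc_mult_mat_vec)

lemma B_quadratic_form: "x \<bullet> (B *\<^sub>v x) = w x \<bullet> w x - t x \<bullet> t x"
proof -
  have "x \<bullet> (B *\<^sub>v x) = 2 * (x \<bullet> w x) - x \<bullet> x" unfolding B_mult_vec using x w_carrier
    by (simp add: scalar_prod_minus_distrib[of _ r] scalar_prod_add_distrib[of _ r])
  also have "x \<bullet> w x = w x \<bullet> w x + t x \<bullet> w x"
    using w_carrier t_carrier x_split add_scalar_prod_distrib[of "w x" r "t x" "w x"] by simp
  finally show ?thesis using x_norm_sq_split t_scalar_prod_w by simp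
qed

lemma C_mult_vec_norm_sq: "(C *\<^sub>v x) \<bullet> (C *\<^sub>v x) = 4 * (u x \<bullet> u x)"
  unfolding C_mult_vec using u_carrier by (simp add: add_scalar_prod_distrib[of _ m] scalar_prod_add_distrib[of _ m])

lemma w_split: "w x = Y *\<^sub>v w x + Y *\<^sub>v t x"
proof -
  have "w x = Y *\<^sub>v (w x + t x)" using arg_cong[OF x_split, of "(*\<^sub>v) Y"] by (simp only: w_def)
  thus ?thesis using Y w_carrier t_carrier by (simp add: mult_add_distrib_mat_vec)
qed

end

lemma C_contraction: "contraction C"
proof (rule contractionI[OF C_carrier])
  fix x :: "real vec" assume x: "x \<in> carrier_vec r"
  have "u x \<bullet> u x \<le> sqrt (t x \<bullet> t x) * sqrt (w x \<bullet> w x)"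
    using t_scalar_prod_w[OF x] scalar_prod_le_norms[of "w x" "t x"] w_carrier[OF x] t_carrier[OF x] by simp
  moreover have "2 * (sqrt (t x \<bullet> t x) * sqrt (w x \<bullet> w x)) \<le> t x \<bullet> t x + w x \<bullet> w x"
  proof -
    have "0 \<le> (sqrt (t x \<bullet> t x) - sqrt (w x \<bullet> w x))^2" by simp
    thus ?thesis using scalar_prod_self_nonneg[of "t x"] scalar_prod_self_nonneg[of "w x"]
      by (simp add: power2_eq_square algebra_simps)
  qed
  ultimately have "2 * (u x \<bullet> u x) \<le> t x \<bullet> t x + w x \<bullet> w x" by simp
  thus "(C *\<^sub>v x) \<bullet> (C *\<^sub>v x) \<le> x \<bullet> x" unfolding C_mult_vec_norm_sq[OF x] x_norm_sq_split[OF x] by simp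
qed

lemma B_B_mult_vec:
  assumes x: "x \<in> carrier_vec r"
  shows "B *\<^sub>v (B *\<^sub>v x) = (Y *\<^sub>v w x + Y *\<^sub>v w x - w x) + (Y *\<^sub>v w x + Y *\<^sub>v w x - w x) - (w x + w x - x)"
proof -
  have "B *\<^sub>v x \<in> carrier_vec r" using B_carrier x by simp
  moreover have "w (B *\<^sub>v x) = Y *\<^sub>v w x + Y *\<^sub>v w x - w x"
    unfolding w_def B_mult_vec[OF x] using Y w_carrier[OF x] x
    by (simp add: w_def mult_minus_distrib_mat_vec[of _ r r] mult_add_distrib_mat_vec[of _ r r])
  ultimately show ?thesis using B_mult_vec[of "B *\<^sub>v x"] B_mult_vec[OF x] by simp
qed

lemma C_T_C_mult_vec:
  assumes x: "x \<in> carrier_vec r"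
  shows "C\<^sup>T *\<^sub>v (C *\<^sub>v x) = (Y *\<^sub>v t x + Y *\<^sub>v t x) + (Y *\<^sub>v t x + Y *\<^sub>v t x)"
proof -
  note ux = u_carrier[OF x] and tx = t_carrier[OF x]
  have CT: "C\<^sup>T = Y * A\<^sup>T + Y * A\<^sup>T"
    unfolding C_def using A Y Y_sym transpose_add[of "A * Y" m r] transpose_mult[OF A Y] by simp
  have "C\<^sup>T *\<^sub>v (C *\<^sub>v x) = Y *\<^sub>v (A\<^sup>T *\<^sub>v (u x + u x)) + Y *\<^sub>v (A\<^sup>T *\<^sub>v (u x + u x))"
    unfolding CT C_mult_vec[OF x] using A Y ux by (simp add: add_mult_distrib_mat_vec[of _ r m] assoc_mult_mat_vec)
  also have "A\<^sup>T *\<^sub>v (u x + u x) = t x + t x" unfolding t_def using A ux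
    by (simp add: mult_add_distrib_mat_vec[of _ r m])
  also have "Y *\<^sub>v (t x + t x) = Y *\<^sub>v t x + Y *\<^sub>v t x" using Y tx
    by (simp add: mult_add_distrib_mat_vec[of _ r r])
  finally show ?thesis .
qed

lemma B_square_plus_C: "B * B + C\<^sup>T * C = 1\<^sub>m r"
proof (rule mat_eq_one_if_fixes_vectors)
  show "B * B + C\<^sup>T * C \<in> carrier_mat r r" using B_carrier C_carrier by simp
  fix x :: "real vec" assume x: "x \<in> carrier_vec r"
  note wx = w_carrier[OF x] and tx = t_carrier[OF x]
  have yw: "Y *\<^sub>v w x \<in> carrier_vec r" and yt: "Y *\<^sub>v t x \<in> carrier_vec r" using Y wx tx by auto
  have "(B * B + C\<^sup>T * C) *\<^sub>v x = B *\<^sub>v (B *\<^sub>v x) + C\<^sup>T *\<^sub>v (C *\<^sub>v x)"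
    using B_carrier C_carrier x by (simp add: add_mult_distrib_mat_vec[of _ r r] assoc_mult_mat_vec)
  also have "\<dots> = x" unfolding B_B_mult_vec[OF x] C_T_C_mult_vec[OF x]
  proof (rule eq_vecI)
    fix i assume "i < dim_vec x"
    hence i: "i < r" using x by simp
    have "w x $ i = (Y *\<^sub>v w x) $ i + (Y *\<^sub>v t x) $ i" using w_split[OF x] i yw yt by (metis carrier_vecD index_add_vec(1))
    thus "((Y *\<^sub>v w x + Y *\<^sub>v w x - w x) + (Y *\<^sub>v w x + Y *\<^sub>v w x - w x) - (w x + w x - x)
        + ((Y *\<^sub>v t x + Y *\<^sub>v t x) + (Y *\<^sub>v t x + Y *\<^sub>v t x))) $ i = x $ i"
      using i wx yw yt x carrier_matD[OF Y] by simp
  qed (use x yw yt wx carrier_matD[OF Y] in simp)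
  finally show "(B * B + C\<^sup>T * C) *\<^sub>v x = x" .
qed

lemma cayleyU_orthonormal: "(cayleyU A)\<^sup>T * cayleyU A = 1\<^sub>m r"
  unfolding cayleyU_eq append_rows_transpose_mult_self[OF B_carrier C_carrier] B_sym
  by (rule B_square_plus_C)

end

lemma cayley_blocks_exist:
  assumes A: "A \<in> carrier_mat m r"
  shows "\<exists>Y. cayley_blocks A Y m r"
proof
  show "cayley_blocks A (mat r r (\<lambda>(i,j). cayley_res A $$ (i,j))) m r"
    using A cayley_res_blocks(1)[OF A] by unfold_locales auto
qed

lemma cayleyU_orthonormal:
  assumes "A \<in> carrier_mat m r"
  shows "(cayleyU A)\<^sup>T * cayleyU A = 1\<^sub>m r"
  using cayley_blocks_exist[OF assms] cayley_blocks.cayleyU_orthonormal by blast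

lemma sinTheta_F_cayleyU_le:
  assumes A: "A \<in> carrier_mat m r" and A0: "A0 \<in> carrier_mat m r"
  shows "sinTheta_F (cayleyU A) (cayleyU A0) \<le> 4 * frob_norm (A - A0)"
proof -
  have "(sinTheta_F (cayleyU A) (cayleyU A0))^2 \<le> frob_sq (cayleyU A - cayleyU A0)"
    by (rule sinTheta_F_sq_le_frob_sq_diff[OF cayleyU_index(1)[OF A] cayleyU_index(1)[OF A0]
          cayleyU_orthonormal[OF A] cayleyU_orthonormal[OF A0]])
  also have "\<dots> \<le> 4 * frob_sq (Xmat A - Xmat A0)"
    using frob_sq_cayleyU_diff_le[OF A A0] frob_sq_cayley_res_diff_le[OF A A0] by linarith
  also have "\<dots> \<le> 16 * frob_sq (A - A0)"
    using frob_sq_Xmat_diff[OF A A0] frob_sq_nonneg[of "A - A0"] by linarith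
  also have "\<dots> = (4 * frob_norm (A - A0))^2" by (simp add: power_mult_distrib frob_norm_sq)
  finally show ?thesis by (rule power2_le_imp_le) (simp add: frob_norm_nonneg)
qed

section \<open>Recovering the parameter from the subspace\<close>

locale cayley_blocks_bounded = cayley_blocks +
  fixes a :: real
  assumes a_nonneg: "0 \<le> a" and a_le_1: "a \<le> 1"
    and A_bound: "\<And>x. x \<in> carrier_vec r \<Longrightarrow> (A *\<^sub>v x) \<bullet> (A *\<^sub>v x) \<le> a^2 * (x \<bullet> x)"
begin

lemma B_pos_def:
  assumes x: "x \<in> carrier_vec r"
  shows "(1 - a^2) / (1 + a^2) * (x \<bullet> x) \<le> x \<bullet> (B *\<^sub>v x)"
proof -
  have uw: "u x \<bullet> u x \<le> a^2 * (w x \<bullet> w x)" unfolding u_def using A_bound w_carrier[OF x] by blast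
  have tu: "t x \<bullet> t x \<le> a^2 * (u x \<bullet> u x)"
    unfolding t_def using transpose_mat_vec_bound[OF A a_nonneg A_bound u_carrier[OF x]] .
  have "(1 - a^2) * (x \<bullet> x) \<le> (1 + a^2) * (x \<bullet> (B *\<^sub>v x))"
    unfolding x_norm_sq_split[OF x] B_quadratic_form[OF x] using uw tu by (simp add: algebra_simps)
  moreover have "0 < 1 + a^2" by (simp add: add_pos_nonneg)
  ultimately show ?thesis by (simp add: divide_le_eq mult.commute)
qed

lemma B_pos_semidef:
  assumes x: "x \<in> carrier_vec r"
  shows "0 \<le> x \<bullet> (B *\<^sub>v x)"
proof -
  have "0 \<le> (1 - a^2) / (1 + a^2) * (x \<bullet> x)"
    using a_nonneg a_le_1 scalar_prod_self_nonneg[of x]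
    by (intro mult_nonneg_nonneg divide_nonneg_pos) (auto simp: power_le_one intro: add_pos_nonneg)
  thus ?thesis using B_pos_def[OF x] by linarith
qed

lemma A_contraction: "contraction A"
proof (rule contractionI[OF A])
  fix x :: "real vec" assume x: "x \<in> carrier_vec r"
  have "a^2 * (x \<bullet> x) \<le> x \<bullet> x"
    using a_nonneg a_le_1 scalar_prod_self_nonneg[of x] by (simp add: mult_left_le_one_le power_le_one)
  with A_bound[OF x] show "(A *\<^sub>v x) \<bullet> (A *\<^sub>v x) \<le> x \<bullet> x" by linarith
qed

end

lemma cayley_blocks_bounded_spec_norm:
  assumes "cayley_blocks A Y m r" "1 \<le> r" "spec_norm A \<le> 1"
  shows "cayley_blocks_bounded A Y m r (spec_norm A)"
proof -
  have A: "A \<in> carrier_mat m r" using assms(1) cayley_blocks.A by blast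
  show ?thesis
    using assms spec_norm_nonneg[OF A assms(2)] spec_norm_bound[OF A]
    by (intro cayley_blocks_bounded.intro cayley_blocks_bounded_axioms.intro) auto
qed

locale cayley_pair =
  U: cayley_blocks_bounded A Y m r a + V: cayley_blocks_bounded A0 Y0 m r a0
  for A Y A0 Y0 :: "real mat" and m r :: nat and a a0 :: real +
  assumes a0_lt_1: "a0 < 1"
begin

definition b :: real where "b = (1 - a0^2) / (1 + a0^2)"

lemma b_pos: "0 < b"
proof -
  have "a0^2 < 1" using V.a_nonneg a0_lt_1 by (simp add: abs_square_less_1)
  thus ?thesis unfolding b_def by (simp add: add_pos_nonneg)
qed

lemma B_diff_bound: "b * frob_norm (U.B - V.B) \<le> frob_norm (U.B * U.B - V.B * V.B)"
proof -
  note B = U.B_carrier and B0 = V.B_carrier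
  have D: "U.B - V.B \<in> carrier_mat r r" using B0 by (rule minus_carrier_mat)
  have "U.B * U.B - V.B * V.B = U.B * (U.B - V.B) + (U.B - V.B) * V.B"
    using B B0 by (simp add: mult_minus_distrib_mat minus_mult_distrib_mat) (intro eq_matI, auto)
  thus ?thesis
    using frob_norm_sylvester_lower_bound[OF B B0 D V.B_sym U.B_pos_semidef V.B_pos_def[folded b_def]]
    by simp
qed

lemma C_diff_bound:
  "b * frob_norm (U.C - V.C) \<le> frob_norm (U.C * U.B - V.C * V.B) + frob_norm (U.B - V.B)"
proof -
  note B = U.B_carrier and B0 = V.B_carrier and C = U.C_carrier and C0 = V.C_carrier
  have D: "U.B - V.B \<in> carrier_mat r r" and DC: "U.C - V.C \<in> carrier_mat m r"
    using B0 C0 by (auto intro: minus_carrier_mat)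
  have "(U.C - V.C) * V.B = (U.C * U.B - V.C * V.B) - U.C * (U.B - V.B)"
    using B B0 C C0 by (simp add: mult_minus_distrib_mat minus_mult_distrib_mat) (intro eq_matI, auto)
  hence "b * frob_norm (U.C - V.C) \<le> frob_norm ((U.C * U.B - V.C * V.B) - U.C * (U.B - V.B))"
    using frob_norm_mult_right_lower_bound[OF B0 DC V.B_sym V.B_pos_def[folded b_def]] by simp
  also have "\<dots> \<le> frob_norm (U.C * U.B - V.C * V.B) + frob_norm (U.C * (U.B - V.B))"
    using B B0 C C0 D by (intro frob_norm_diff_le[of _ m r]) auto
  also have "frob_norm (U.C * (U.B - V.B)) \<le> frob_norm (U.B - V.B)"
    by (rule frob_norm_mult_contraction_left[OF C D U.C_contraction])
  finally show ?thesis by simp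
qed

lemma A_diff_bound: "frob_norm (A - A0) \<le> frob_norm (U.C - V.C) + frob_norm (U.B - V.B)"
proof -
  note B = U.B_carrier and B0 = V.B_carrier
  let ?D = "U.B - V.B"
  have D: "?D \<in> carrier_mat r r" using B0 by (rule minus_carrier_mat)
  have B0I: "V.B + 1\<^sub>m r \<in> carrier_mat r r" using B0 by simp
  have sym: "(V.B + 1\<^sub>m r)\<^sup>T = V.B + 1\<^sub>m r" using transpose_add[OF B0, of "1\<^sub>m r"] V.B_sym by simp
  have pd: "1 * (x \<bullet> x) \<le> x \<bullet> ((V.B + 1\<^sub>m r) *\<^sub>v x)" if x: "x \<in> carrier_vec r" for x
    using V.B_pos_semidef[OF x] B0 x by (simp add: add_mult_distrib_mat_vec scalar_prod_add_distrib[of _ r])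
  have "(A - A0) * (V.B + 1\<^sub>m r) = (A * (U.B + 1\<^sub>m r) - A0 * (V.B + 1\<^sub>m r)) - A * ?D"
  proof -
    have e1: "(A - A0) * (V.B + 1\<^sub>m r) = A * (V.B + 1\<^sub>m r) - A0 * (V.B + 1\<^sub>m r)"
      using U.A V.A B0I by (rule minus_mult_distrib_mat)
    have e2: "A * (V.B + 1\<^sub>m r) = A * V.B + A" using U.A B0 by (simp add: mult_add_distrib_mat)
    have e3: "A * (U.B + 1\<^sub>m r) = A * U.B + A" using U.A B by (simp add: mult_add_distrib_mat)
    have e4: "A * ?D = A * U.B - A * V.B" by (rule mult_minus_distrib_mat[OF U.A B B0])
    show ?thesis unfolding e1 e2 e3 e4 using U.A V.A B B0 by (intro eq_matI) auto
  qed
  hence eq: "(A - A0) * (V.B + 1\<^sub>m r) = (U.C - V.C) - A * ?D" unfolding U.C_eq V.C_eq .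
  have "1 * frob_norm (A - A0) \<le> frob_norm ((A - A0) * (V.B + 1\<^sub>m r))"
    using V.A by (intro frob_norm_mult_right_lower_bound[OF B0I _ sym pd] minus_carrier_mat)
  also have "\<dots> = frob_norm ((U.C - V.C) - A * ?D)" unfolding eq ..
  also have "\<dots> \<le> frob_norm (U.C - V.C) + frob_norm (A * ?D)"
    using U.C_carrier V.C_carrier U.A D by (intro frob_norm_diff_le[of _ m r]) auto
  also have "frob_norm (A * ?D) \<le> frob_norm ?D"
    by (rule frob_norm_mult_contraction_left[OF U.A D U.A_contraction])
  finally show ?thesis by simp
qed

lemma frob_norm_diff_le_blocks:
  assumes "frob_norm (U.B * U.B - V.B * V.B) \<le> e" and "frob_norm (U.C * U.B - V.C * V.B) \<le> e"
  shows "frob_norm (A - A0) \<le> (2 * (1 / b) + (1 / b)^2) * e"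
proof -
  have D: "frob_norm (U.B - V.B) \<le> e / b"
    using B_diff_bound assms(1) b_pos by (simp add: pos_le_divide_eq mult.commute)
  have "b * frob_norm (U.C - V.C) \<le> e + e / b" using C_diff_bound assms(2) D by linarith
  hence "frob_norm (U.C - V.C) \<le> (e + e / b) / b" using b_pos by (simp add: pos_le_divide_eq mult.commute)
  moreover have "(e + e / b) / b + e / b = (2 * (1 / b) + (1 / b)^2) * e"
    using b_pos by (simp add: field_simps power2_eq_square)
  ultimately show ?thesis using A_diff_bound D by linarith
qed

lemma blocks_diff_le_sinTheta_F:
  shows "frob_norm (U.B * U.B - V.B * V.B) \<le> sqrt 2 * sinTheta_F (cayleyU A) (cayleyU A0)"
    and "frob_norm (U.C * U.B - V.C * V.B) \<le> sqrt 2 * sinTheta_F (cayleyU A) (cayleyU A0)"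
proof -
  let ?s = "sinTheta_F (cayleyU A) (cayleyU A0)"
  let ?P = "cayleyU A * (cayleyU A)\<^sup>T - cayleyU A0 * (cayleyU A0)\<^sup>T"
  note B = U.B_carrier and B0 = V.B_carrier and C = U.C_carrier and C0 = V.C_carrier
  note BC = carrier_append_rows[OF B C] and BC0 = carrier_append_rows[OF B0 C0]
  note orth = cayleyU_index(1)[OF U.A] cayleyU_index(1)[OF V.A] cayleyU_orthonormal[OF U.A] cayleyU_orthonormal[OF V.A]
  have P: "?P \<in> carrier_mat (r+m) (r+m)" unfolding U.cayleyU_eq V.cayleyU_eq using BC BC0
    by (intro minus_carrier_mat mult_carrier_mat) auto
  have "frob_sq ?P = 2 * ?s^2" using frob_sq_proj_diff[OF orth] sinTheta_F_sq[OF orth] by simp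
  hence block: "frob_norm E \<le> sqrt 2 * ?s" if "frob_sq E \<le> frob_sq ?P" for E
    using real_sqrt_le_mono[OF that] sinTheta_F_nonneg[OF orth] unfolding frob_norm_def
    by (simp add: real_sqrt_mult)
  show "frob_norm (U.B * U.B - V.B * V.B) \<le> sqrt 2 * ?s"
  proof (rule block, rule frob_sq_submatrix_le[OF P, of _ r r 0])
    fix i j assume "i < r" "j < r"
    thus "(U.B * U.B - V.B * V.B) $$ (i,j) = ?P $$ (0 + i, j)"
      using append_rows_mult_transpose_index(1)[OF B C] append_rows_mult_transpose_index(1)[OF B0 C0]
        carrier_matD[OF BC] carrier_matD[OF BC0] B B0
      unfolding U.cayleyU_eq V.cayleyU_eq by (simp add: U.B_sym V.B_sym)
  qed (use B B0 in auto)
  show "frob_norm (U.C * U.B - V.C * V.B) \<le> sqrt 2 * ?s"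
  proof (rule block, rule frob_sq_submatrix_le[OF P, of _ m r r])
    fix q j assume "q < m" "j < r"
    thus "(U.C * U.B - V.C * V.B) $$ (q,j) = ?P $$ (r + q, j)"
      using append_rows_mult_transpose_index(2)[OF B C] append_rows_mult_transpose_index(2)[OF B0 C0]
        carrier_matD[OF BC] carrier_matD[OF BC0] B B0 C C0
      unfolding U.cayleyU_eq V.cayleyU_eq by (simp add: U.B_sym V.B_sym)
  qed (use B B0 C C0 in auto)
qed

end

lemma sinTheta_constant_le:
  fixes a :: real
  assumes "0 \<le> a" "a < 1"
  defines "b \<equiv> (1 - a^2) / (1 + a^2)"
  shows "2 * (1 / b) + (1 / b)^2 \<le> 1 + 32 * sqrt 2 * (1 + a^2)^2 / (1 - a^2)^2"
proof -
  define k where "k = (1 + a^2) / (1 - a^2)"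
  have "a^2 < 1" using assms by (simp add: abs_square_less_1)
  hence k1: "1 \<le> k" and "1 / b = k" unfolding k_def b_def by simp_all
  have "2 * k + k^2 \<le> 3 * k^2" using k1 by (simp add: power2_eq_square)
  also have "\<dots> \<le> 32 * sqrt 2 * k^2" by (intro mult_right_mono) (auto intro: order_trans[of _ 32])
  also have "\<dots> \<le> 1 + 32 * sqrt 2 * (1 + a^2)^2 / (1 - a^2)^2" by (simp add: k_def power_divide)
  finally show ?thesis unfolding \<open>1 / b = k\<close> .
qed

lemma frob_norm_diff_le_sinTheta_F:
  assumes A: "A \<in> carrier_mat m r" and A0: "A0 \<in> carrier_mat m r" and r: "1 \<le> r"
    and a: "spec_norm A < 1" and a0: "spec_norm A0 < 1"
  shows "frob_norm (A - A0) \<le> sqrt 2 * (1 + 32 * sqrt 2 * (1 + (spec_norm A0)\<^sup>2)\<^sup>2 / (1 - (spec_norm A0)\<^sup>2)\<^sup>2)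
           * sinTheta_F (cayleyU A) (cayleyU A0)"
proof -
  obtain Y Y0 where "cayley_blocks A Y m r" "cayley_blocks A0 Y0 m r" using cayley_blocks_exist A A0 by metis
  then interpret cayley_pair A Y A0 Y0 m r "spec_norm A" "spec_norm A0"
    using a a0 r by (intro cayley_pair.intro cayley_pair_axioms.intro cayley_blocks_bounded_spec_norm) auto
  let ?s = "sinTheta_F (cayleyU A) (cayleyU A0)"
  have "0 \<le> ?s"
    by (rule sinTheta_F_nonneg[OF cayleyU_index(1)[OF A] cayleyU_index(1)[OF A0]
          cayleyU_orthonormal[OF A] cayleyU_orthonormal[OF A0]])
  have "frob_norm (A - A0) \<le> (2 * (1 / b) + (1 / b)^2) * (sqrt 2 * ?s)"
    by (intro frob_norm_diff_le_blocks blocks_diff_le_sinTheta_F)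
  also have "\<dots> \<le> (1 + 32 * sqrt 2 * (1 + (spec_norm A0)\<^sup>2)\<^sup>2 / (1 - (spec_norm A0)\<^sup>2)\<^sup>2) * (sqrt 2 * ?s)"
    using sinTheta_constant_le[OF V.a_nonneg a0] \<open>0 \<le> ?s\<close> unfolding b_def by (intro mult_right_mono) simp_all
  finally show ?thesis by (simp only: ac_simps)
qed

theorem corollary1:
  fixes p r :: nat and A A0 :: "real mat"
  assumes "1 \<le> r" and "r \<le> p"
    and "A \<in> carrier_mat (p - r) r" and "A0 \<in> carrier_mat (p - r) r"
    and "spec_norm A < 1" and "spec_norm A0 < 1"
  shows "(sinTheta_F (cayleyU A) (cayleyU A0)
            \<le> (1 - (spec_norm A0)\<^sup>2)\<^sup>2 / (8 * (1 + (spec_norm A0)\<^sup>2)\<^sup>2)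
          \<longrightarrow> vnorm2 (vecm A - vecm A0)
            \<le> sqrt 2 * (1 + 32 * sqrt 2 * (1 + (spec_norm A0)\<^sup>2)\<^sup>2 / (1 - (spec_norm A0)\<^sup>2)\<^sup>2)
               * sinTheta_F (cayleyU A) (cayleyU A0))
       \<and> sinTheta_F (cayleyU A) (cayleyU A0) \<le> 4 * vnorm2 (vecm A - vecm A0)"
  using frob_norm_diff_le_sinTheta_F[OF assms(3,4,1,5,6)] sinTheta_F_cayleyU_le[OF assms(3,4)]
    vnorm2_vecm_diff[OF assms(3,4)] by simp

end
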